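(* Let $\mathcal K$ be a 2-category which admits Eilenberg–Moore constructions for monads and in which idempotent 2-cells split, with $J^w$ as in the context. Let $(V,\psi),(W,\phi):(t,\mu,\eta)\to(t',\mu',\eta')$ be 1-cells of $\mathrm{EM}^w(\mathcal K)$ and $\omega:V\Rightarrow W$ a 2-cell of $\mathcal K$; let $(\iota,\pi)$ denote the chosen splittings used to construct $J^w(V,\psi)$ and $J^w(W,\phi)$, so that $(J^w(V,\psi),\iota,\pi)$ and $(J^w(W,\phi),\iota,\pi)$ are weak liftings of $V$ and $W$ for $t,t'$. (1) The following are equivalent: (i) $\omega t\ast\psi=W\mu\ast\phi t\ast t'\omega t\ast t'\psi\ast t'\eta'V$; (ii) $\omega t\ast\psi\ast\eta'V$ is a 2-cell $(V,\psi)\Rightarrow(W,\phi)$ in $\mathrm{EM}^w(\mathcal K)$; (iii) $\pi\ast\omega v\ast\iota$ is a morphism of $t'$-algebras $(v'J^w(V,\psi),v'\epsilon'J^w(V,\psi))\to(v'J^w(W,\phi),v'\epsilon'J^w(W,\phi))$ (i.e. a 2-cell between these 1-cells $IJ(t)\to t'$ of $\mathrm{EM}(\mathcal K)$) and $\iota\ast\pi\ast\omega v\ast\iota=\omega v\ast\iota$; (iv) $\omega$ has a weak $\iota$-lifting $J^w(V,\psi)\Rightarrow J^w(W,\phi)$. If these hold, then $v'J^w(\omega t\ast\psi\ast\eta'V)=\pi\ast\omega v\ast\iota$, i.e. the weak $\iota$-lifting of $\omega$ is $J^w(\omega t\ast\psi\ast\eta'V)$. (2) The following are equivalent: (i) $\phi\ast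 t'\omega=W\mu\ast\phi t\ast\eta'Wt\ast\omega t\ast\psi$; (ii) $\phi\ast\eta'W\ast\omega$ is a 2-cell $(V,\psi)\Rightarrow(W,\phi)$ in $\mathrm{EM}^w(\mathcal K)$; (iii) $\pi\ast\omega v\ast\iota$ is a morphism of $t'$-algebras as in (1)(iii) and $\pi\ast\omega v\ast\iota\ast\pi=\pi\ast\omega v$; (iv) $\omega$ has a weak $\pi$-lifting $J^w(V,\psi)\Rightarrow J^w(W,\phi)$. If these hold, then $v'J^w(\phi\ast\eta'W\ast\omega)=\pi\ast\omega v\ast\iota$, i.e. the weak $\pi$-lifting of $\omega$ is $J^w(\phi\ast\eta'W\ast\omega)$. (3) The following are equivalent: (i) $\phi\ast t'\omega=\omega t\ast\psi$; (ii) $\phi\ast\eta'W\ast\omega$ and $\omega t\ast\psi\ast\eta'V$ are both 2-cells $(V,\psi)\Rightarrow(W,\phi)$ in $\mathrm{EM}^w(\mathcal K)$ (and then they are equal); (iii) $\pi\ast\omega v\ast\iota$ is a morphism of $t'$-algebras as in (1)(iii) and $\iota\ast\pi\ast\omega v=\omega v\ast\iota\ast\pi$; (iv) $\omega$ has both a weak $\iota$-lifting and a weak $\pi$-lifting $J^w(V,\psi)\Rightarrow J^w(W,\phi)$ (and then they are equal).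
   Context: Conventions in a 2-category $\mathcal K$: horizontal composition and whiskering by juxtaposition in the order of functor composition; identity 1-cell of $k$ written $k$, identity 2-cell of $V$ written $V$; vertical composition $\ast$ with $\alpha\ast\beta$ meaning $\beta$ then $\alpha$. Monads $(t,\mu,\eta)$ on $k$ are associative and unital. $\mathrm{EM}^w(\mathcal K)$: 1-cells $(V,\psi):(t,\mu,\eta)\to(t',\mu',\eta')$ with $V:k\to k'$, $\psi:t'V\Rightarrow Vt$, $V\mu\ast\psi t\ast t'\psi=\psi\ast\mu'V$; 2-cells $(V,\psi)\Rightarrow(W,\phi)$ are $\varrho:V\Rightarrow Wt$ with $W\mu\ast\varrho t\ast\psi=W\mu\ast\phi t\ast t'\varrho$ and $\varrho=W\mu\ast\phi t\ast\eta'Wt\ast\varrho$; vertical composite $\tau\bullet\varrho=U\mu\ast\tau t\ast\varrho$, identity 2-cell on $(W,\phi)$ is $\phi\ast\eta'W$ (these form a 2-category, with the Lack–Street $\mathrm{EM}(\mathcal K)$ as sub-2-category of 1-cells with $\psi\ast\eta'V=V\eta$). $\mathcal K$ admits Eilenberg–Moore constructions for monads: the inclusion $I:\mathcal K\to\mathrm{EM}(\mathcal K)$ has a right 2-adjoint $J$; each monad $(t,\mu,\eta)$ gives an adjunction $f\dashv v$, $f:k\to J(t)$, $v:J(t)\to k$, unit $\eta$, counit $\epsilon:fv\Rightarrow J(t)$, $t=vf$, $\mu=v\epsilon f$ (for $t'$: $f',v',\eta',\epsilon'$); $X\mapsto(vX,v\epsilon X)$, $\omega\mapsto v\omega$ is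 an isomorphism from $\mathcal K(l,J(t))$ to the category of $t$-algebras $(A:l\to k,\alpha:tA\Rightarrow A)$ with morphisms $\rho$ satisfying $\beta\ast t\rho=\rho\ast\alpha$. Idempotent 2-cells split. $J^w$: for each 1-cell $(V,\psi)$ of $\mathrm{EM}^w(\mathcal K)$ a splitting $Vv\overset{\pi}{\Rightarrow}\widetilde V\overset{\iota}{\Rightarrow}Vv$ of the idempotent $Vv\epsilon\ast\psi v\ast\eta'Vv$ is fixed; $J^w(t)=J(t)$; $J^w(V,\psi):J(t)\to J(t')$ is the unique 1-cell with $v'J^w(V,\psi)=\widetilde V$ and $v'\epsilon'J^w(V,\psi)=\pi\ast Vv\epsilon\ast\psi v\ast t'\iota$; for a 2-cell $\varrho:(V,\psi)\Rightarrow(W,\phi)$, $J^w(\varrho)$ is the unique 2-cell with $v'J^w(\varrho)=\pi\ast Wv\epsilon\ast\varrho v\ast\iota$. Weak liftings: a weak lifting of a 1-cell $V:k\to k'$ for monads $t$ (on $k$) and $t'$ (on $k'$) is a 1-cell $\overline V:J(t)\to J(t')$ together with a 2-cell $\iota:v'\overline V\Rightarrow Vv$ and a retraction $\pi:Vv\Rightarrow v'\overline V$ ($\pi\ast\iota$ identity). Given weak liftings $(\overline V,\iota,\pi)$ of $V$ and $(\overline W,\iota,\pi)$ of $W$, a weak $\iota$-lifting of $\omega:V\Rightarrow W$ is a 2-cell $\omega^\iota:\overline V\Rightarrow\overline W$ with $\iota\ast v'\omega^\iota=\omega v\ast\iota$; a weak $\pi$-lifting is $\omega^\pi:\overline V\Rightarrow\overline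 W$ with $v'\omega^\pi\ast\pi=\pi\ast\omega v$. *)

theory Defs
  imports Main
begin

text \<open>A (strict) 2-category, represented by types of 0-cells ('o), 1-cells ('a) and
2-cells ('c) with total operations that are only meaningful on composable arguments.
Juxtaposition of the paper (horizontal composition in the order of functor composition)
is hc; vertical composition (alpha * beta = beta then alpha) is vc.\<close>

record ('o,'a,'c) twocat =
  dom1 :: "'a \<Rightarrow> 'o"
  cod1 :: "'a \<Rightarrow> 'o"
  id1 :: "'o \<Rightarrow> 'a"
  cp1 :: "'a \<Rightarrow> 'a \<Rightarrow> 'a"
  dom2 :: "'c \<Rightarrow> 'a"
  cod2 :: "'c \<Rightarrow> 'a"
  id2 :: "'a \<Rightarrow> 'c"
  vc :: "'c \<Rightarrow> 'c \<Rightarrow> 'c"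
  hc :: "'c \<Rightarrow> 'c \<Rightarrow> 'c"

definition two_category :: "('o,'a,'c) twocat \<Rightarrow> bool" where
  "two_category C \<longleftrightarrow>
    (\<forall>k. dom1 C (id1 C k) = k \<and> cod1 C (id1 C k) = k) \<and>
    (\<forall>g f. dom1 C g = cod1 C f \<longrightarrow>
        dom1 C (cp1 C g f) = dom1 C f \<and> cod1 C (cp1 C g f) = cod1 C g) \<and>
    (\<forall>f. cp1 C f (id1 C (dom1 C f)) = f \<and> cp1 C (id1 C (cod1 C f)) f = f) \<and>
    (\<forall>h g f. dom1 C h = cod1 C g \<longrightarrow> dom1 C g = cod1 C f \<longrightarrow>
        cp1 C (cp1 C h g) f = cp1 C h (cp1 C g f)) \<and>
    (\<forall>\<alpha>. dom1 C (dom2 C \<alpha>) = dom1 C (cod2 C \<alpha>) \<and> cod1 C (dom2 C \<alpha>) = cod1 C (cod2 C \<alpha>)) \<and>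
    (\<forall>f. dom2 C (id2 C f) = f \<and> cod2 C (id2 C f) = f) \<and>
    (\<forall>\<beta> \<alpha>. dom2 C \<beta> = cod2 C \<alpha> \<longrightarrow>
        dom2 C (vc C \<beta> \<alpha>) = dom2 C \<alpha> \<and> cod2 C (vc C \<beta> \<alpha>) = cod2 C \<beta>) \<and>
    (\<forall>\<alpha>. vc C \<alpha> (id2 C (dom2 C \<alpha>)) = \<alpha> \<and> vc C (id2 C (cod2 C \<alpha>)) \<alpha> = \<alpha>) \<and>
    (\<forall>\<gamma> \<beta> \<alpha>. dom2 C \<gamma> = cod2 C \<beta> \<longrightarrow> dom2 C \<beta> = cod2 C \<alpha> \<longrightarrow>
        vc C (vc C \<gamma> \<beta>) \<alpha> = vc C \<gamma> (vc C \<beta> \<alpha>)) \<and>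
    (\<forall>\<beta> \<alpha>. dom1 C (dom2 C \<beta>) = cod1 C (dom2 C \<alpha>) \<longrightarrow>
        dom2 C (hc C \<beta> \<alpha>) = cp1 C (dom2 C \<beta>) (dom2 C \<alpha>) \<and>
        cod2 C (hc C \<beta> \<alpha>) = cp1 C (cod2 C \<beta>) (cod2 C \<alpha>)) \<and>
    (\<forall>\<alpha>. hc C \<alpha> (id2 C (id1 C (dom1 C (dom2 C \<alpha>)))) = \<alpha> \<and>
         hc C (id2 C (id1 C (cod1 C (dom2 C \<alpha>)))) \<alpha> = \<alpha>) \<and>
    (\<forall>\<gamma> \<beta> \<alpha>. dom1 C (dom2 C \<gamma>) = cod1 C (dom2 C \<beta>) \<longrightarrow>
        dom1 C (dom2 C \<beta>) = cod1 C (dom2 C \<alpha>) \<longrightarrow>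
        hc C (hc C \<gamma> \<beta>) \<alpha> = hc C \<gamma> (hc C \<beta> \<alpha>)) \<and>
    (\<forall>g f. dom1 C g = cod1 C f \<longrightarrow> hc C (id2 C g) (id2 C f) = id2 C (cp1 C g f)) \<and>
    (\<forall>\<beta>' \<beta> \<alpha>' \<alpha>. dom2 C \<beta>' = cod2 C \<beta> \<longrightarrow> dom2 C \<alpha>' = cod2 C \<alpha> \<longrightarrow>
        dom1 C (dom2 C \<beta>) = cod1 C (dom2 C \<alpha>) \<longrightarrow>
        hc C (vc C \<beta>' \<beta>) (vc C \<alpha>' \<alpha>) = vc C (hc C \<beta>' \<alpha>') (hc C \<beta> \<alpha>))"

definition hom1 :: "('o,'a,'c) twocat \<Rightarrow> 'a \<Rightarrow> 'o \<Rightarrow> 'o \<Rightarrow> bool" where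
  "hom1 C f k l \<longleftrightarrow> dom1 C f = k \<and> cod1 C f = l"

definition hom2 :: "('o,'a,'c) twocat \<Rightarrow> 'c \<Rightarrow> 'a \<Rightarrow> 'a \<Rightarrow> bool" where
  "hom2 C \<alpha> f g \<longleftrightarrow> dom2 C \<alpha> = f \<and> cod2 C \<alpha> = g"

definition lw :: "('o,'a,'c) twocat \<Rightarrow> 'a \<Rightarrow> 'c \<Rightarrow> 'c" where
  "lw C f \<alpha> = hc C (id2 C f) \<alpha>"

definition rw :: "('o,'a,'c) twocat \<Rightarrow> 'c \<Rightarrow> 'a \<Rightarrow> 'c" where
  "rw C \<alpha> f = hc C \<alpha> (id2 C f)"

definition is_monad :: "('o,'a,'c) twocat \<Rightarrow> 'o \<Rightarrow> 'a \<Rightarrow> 'c \<Rightarrow> 'c \<Rightarrow> bool" where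
  "is_monad C k t \<mu> \<eta> \<longleftrightarrow>
     hom1 C t k k \<and> hom2 C \<mu> (cp1 C t t) t \<and> hom2 C \<eta> (id1 C k) t \<and>
     vc C \<mu> (rw C \<mu> t) = vc C \<mu> (lw C t \<mu>) \<and>
     vc C \<mu> (rw C \<eta> t) = id2 C t \<and> vc C \<mu> (lw C t \<eta>) = id2 C t"

definition is_alg :: "('o,'a,'c) twocat \<Rightarrow> 'o \<Rightarrow> 'o \<Rightarrow> 'a \<Rightarrow> 'c \<Rightarrow> 'c \<Rightarrow> 'a \<Rightarrow> 'c \<Rightarrow> bool" where
  "is_alg C l k t \<mu> \<eta> A \<alpha> \<longleftrightarrow>
     hom1 C A l k \<and> hom2 C \<alpha> (cp1 C t A) A \<and>
     vc C \<alpha> (rw C \<eta> A) = id2 C A \<and> vc C \<alpha> (lw C t \<alpha>) = vc C \<alpha> (rw C \<mu> A)"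

definition alg_mor :: "('o,'a,'c) twocat \<Rightarrow> 'a \<Rightarrow> 'a \<Rightarrow> 'c \<Rightarrow> 'a \<Rightarrow> 'c \<Rightarrow> 'c \<Rightarrow> bool" where
  "alg_mor C t A \<alpha> B \<beta> \<rho> \<longleftrightarrow> hom2 C \<rho> A B \<and> vc C \<beta> (lw C t \<rho>) = vc C \<rho> \<alpha>"

text \<open>Eilenberg--Moore object J of the monad t on k: adjunction f -| v with unit eta,
counit eps, t = vf, mu = v eps f, and X |-> (vX, v eps X), omega |-> v omega an isomorphism
from K(l, J) onto the category of t-algebras with domain l, for every l.\<close>
definition em_object :: "('o,'a,'c) twocat \<Rightarrow> 'o \<Rightarrow> 'a \<Rightarrow> 'c \<Rightarrow> 'c \<Rightarrow>
    'o \<Rightarrow> 'a \<Rightarrow> 'a \<Rightarrow> 'c \<Rightarrow> bool" where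
  "em_object C k t \<mu> \<eta> J f v \<epsilon> \<longleftrightarrow>
     hom1 C f k J \<and> hom1 C v J k \<and> hom2 C \<epsilon> (cp1 C f v) (id1 C J) \<and>
     t = cp1 C v f \<and> \<mu> = lw C v (rw C \<epsilon> f) \<and>
     vc C (rw C \<epsilon> f) (lw C f \<eta>) = id2 C f \<and>
     vc C (lw C v \<epsilon>) (rw C \<eta> v) = id2 C v \<and>
     (\<forall>l A \<alpha>. is_alg C l k t \<mu> \<eta> A \<alpha> \<longrightarrow>
        (\<exists>!X. hom1 C X l J \<and> cp1 C v X = A \<and> lw C v (rw C \<epsilon> X) = \<alpha>)) \<and>
     (\<forall>l X Y \<rho>. hom1 C X l J \<longrightarrow> hom1 C Y l J \<longrightarrow>
        alg_mor C t (cp1 C v X) (lw C v (rw C \<epsilon> X)) (cp1 C v Y) (lw C v (rw C \<epsilon> Y)) \<rho> \<longrightarrow>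
        (\<exists>!\<omega>. hom2 C \<omega> X Y \<and> lw C v \<omega> = \<rho>))"

definition admits_EM :: "('o,'a,'c) twocat \<Rightarrow> bool" where
  "admits_EM C \<longleftrightarrow> (\<forall>k t \<mu> \<eta>. is_monad C k t \<mu> \<eta> \<longrightarrow>
      (\<exists>J f v \<epsilon>. em_object C k t \<mu> \<eta> J f v \<epsilon>))"

definition is_splitting :: "('o,'a,'c) twocat \<Rightarrow> 'c \<Rightarrow> 'a \<Rightarrow> 'c \<Rightarrow> 'c \<Rightarrow> bool" where
  "is_splitting C e Y p i \<longleftrightarrow>
     hom2 C p (dom2 C e) Y \<and> hom2 C i Y (dom2 C e) \<and> vc C i p = e \<and> vc C p i = id2 C Y"

definition idempotents_split :: "('o,'a,'c) twocat \<Rightarrow> bool" where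
  "idempotents_split C \<longleftrightarrow> (\<forall>e X. hom2 C e X X \<and> vc C e e = e \<longrightarrow>
      (\<exists>Y p i. is_splitting C e Y p i))"

definition emw1 :: "('o,'a,'c) twocat \<Rightarrow> 'a \<Rightarrow> 'c \<Rightarrow> 'a \<Rightarrow> 'c \<Rightarrow> 'a \<Rightarrow> 'c \<Rightarrow> bool" where
  "emw1 C t \<mu> t' \<mu>' V \<psi> \<longleftrightarrow>
     hom1 C V (dom1 C t) (dom1 C t') \<and> hom2 C \<psi> (cp1 C t' V) (cp1 C V t) \<and>
     vc C (lw C V \<mu>) (vc C (rw C \<psi> t) (lw C t' \<psi>)) = vc C \<psi> (rw C \<mu>' V)"

definition emw2 :: "('o,'a,'c) twocat \<Rightarrow> 'a \<Rightarrow> 'c \<Rightarrow> 'a \<Rightarrow> 'c \<Rightarrow>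
    'a \<Rightarrow> 'c \<Rightarrow> 'a \<Rightarrow> 'c \<Rightarrow> 'c \<Rightarrow> bool" where
  "emw2 C t \<mu> t' \<eta>' V \<psi> W \<phi> \<rho> \<longleftrightarrow>
     hom2 C \<rho> V (cp1 C W t) \<and>
     vc C (lw C W \<mu>) (vc C (rw C \<rho> t) \<psi>) = vc C (lw C W \<mu>) (vc C (rw C \<phi> t) (lw C t' \<rho>)) \<and>
     \<rho> = vc C (lw C W \<mu>) (vc C (rw C \<phi> t) (vc C (rw C \<eta>' (cp1 C W t)) \<rho>))"

definition emw_idem :: "('o,'a,'c) twocat \<Rightarrow> 'a \<Rightarrow> 'c \<Rightarrow> 'c \<Rightarrow> 'a \<Rightarrow> 'c \<Rightarrow> 'c" where
  "emw_idem C v \<epsilon> \<eta>' V \<psi> =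
     vc C (lw C (cp1 C V v) \<epsilon>) (vc C (rw C \<psi> v) (rw C \<eta>' (cp1 C V v)))"

text \<open>J^w on 1-cells, given the chosen splitting (Vt, pi, iota) of the idempotent:
the unique X : J -> J' with v'X = Vt and v' eps' X = pi * Vv eps * psi v * t' iota.\<close>
definition Jw1 :: "('o,'a,'c) twocat \<Rightarrow> 'a \<Rightarrow> 'c \<Rightarrow> 'a \<Rightarrow> 'a \<Rightarrow> 'c \<Rightarrow> 'o \<Rightarrow> 'o \<Rightarrow>
    'a \<Rightarrow> 'c \<Rightarrow> 'a \<Rightarrow> 'c \<Rightarrow> 'c \<Rightarrow> 'a" where
  "Jw1 C v \<epsilon> t' v' \<epsilon>' J J' V \<psi> Vt \<pi> \<iota> =
     (THE X. hom1 C X J J' \<and> cp1 C v' X = Vt \<and>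
        lw C v' (rw C \<epsilon>' X) =
          vc C \<pi> (vc C (lw C (cp1 C V v) \<epsilon>) (vc C (rw C \<psi> v) (lw C t' \<iota>))))"

definition Jw2 :: "('o,'a,'c) twocat \<Rightarrow> 'a \<Rightarrow> 'c \<Rightarrow> 'a \<Rightarrow> 'a \<Rightarrow> 'a \<Rightarrow>
    'a \<Rightarrow> 'c \<Rightarrow> 'c \<Rightarrow> 'c \<Rightarrow> 'c" where
  "Jw2 C v \<epsilon> v' XV XW W \<pi>W \<iota>V \<rho> =
     (THE \<sigma>. hom2 C \<sigma> XV XW \<and>
        lw C v' \<sigma> = vc C \<pi>W (vc C (lw C (cp1 C W v) \<epsilon>) (vc C (rw C \<rho> v) \<iota>V)))"

definition weak_iota_lifting :: "('o,'a,'c) twocat \<Rightarrow> 'a \<Rightarrow> 'a \<Rightarrow> 'a \<Rightarrow> 'c \<Rightarrow> 'c \<Rightarrow>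
    'a \<Rightarrow> 'c \<Rightarrow> 'c \<Rightarrow> bool" where
  "weak_iota_lifting C v' XV XW \<iota>V \<iota>W v \<omega> \<theta> \<longleftrightarrow>
     hom2 C \<theta> XV XW \<and> vc C \<iota>W (lw C v' \<theta>) = vc C (rw C \<omega> v) \<iota>V"

definition weak_pi_lifting :: "('o,'a,'c) twocat \<Rightarrow> 'a \<Rightarrow> 'a \<Rightarrow> 'a \<Rightarrow> 'c \<Rightarrow> 'c \<Rightarrow>
    'a \<Rightarrow> 'c \<Rightarrow> 'c \<Rightarrow> bool" where
  "weak_pi_lifting C v' XV XW \<pi>V \<pi>W v \<omega> \<theta> \<longleftrightarrow>
     hom2 C \<theta> XV XW \<and> vc C (lw C v' \<theta>) \<pi>V = vc C \<pi>W (rw C \<omega> v)"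

end

theory Submission
  imports Defs
begin

text \<open>Transposition \<open>\<rho> \<mapsto> Wv\<epsilon> \<ast> \<rho>v\<close> along \<open>f \<stileturn> v\<close> is injective, so every equation between
  2-cells into \<open>Wt\<close> may be checked after transposition, as an equation between 2-cells into
  \<open>Wv\<close>. There everything is expressed through the weak \<open>t'\<close>-actions \<open>\<beta>\<^sub>V = Vv\<epsilon> \<ast> \<psi>v\<close> and
  \<open>\<beta>\<^sub>W\<close>, their idempotents \<open>e = \<beta> \<ast> \<eta>'\<close> with splittings \<open>(\<pi>, \<iota>)\<close>, and \<open>w = \<omega>v\<close>. Condition (1)
  becomes \<open>w \<ast> \<beta>\<^sub>V = \<beta>\<^sub>W \<ast> t'w \<ast> t'e\<^sub>V\<close>, which splits into "\<open>\<sigma> = \<pi>\<^sub>W \<ast> w \<ast> \<iota>\<^sub>V\<close> is a morphism of the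
  split algebras" and \<open>e\<^sub>W \<ast> w \<ast> e\<^sub>V = w \<ast> e\<^sub>V\<close>; condition (2) is the same with \<open>e\<^sub>W \<ast> w \<ast> e\<^sub>V = e\<^sub>W \<ast> w\<close>, and
  (3), their conjunction, amounts to \<open>e\<^sub>W \<ast> w = w \<ast> e\<^sub>V\<close>. Both kinds of weak liftings are 2-cells \<open>\<theta>\<close>
  with \<open>v'\<theta> = \<sigma>\<close>; by the universal property of \<open>J(t')\<close> such a \<open>\<theta>\<close> exists, uniquely, exactly
  when \<open>\<sigma>\<close> is an algebra morphism, and it is the value of \<open>J\<^sup>w\<close> on the 2-cells of (1)(ii), (2)(ii).\<close>

section \<open>Whiskering calculus in a strict 2-category\<close>

locale two_cat = fixes C :: "('o,'a,'c) twocat" assumes two_cat: "two_category C"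
begin

lemmas axioms = two_cat[unfolded two_category_def]
lemmas id1_law = axioms[THEN conjunct1]
  and cp1_law = axioms[THEN conjunct2, THEN conjunct1]
  and cp1_unit_law = axioms[THEN conjunct2, THEN conjunct2, THEN conjunct1]
  and cp1_assoc_law = axioms[THEN conjunct2, THEN conjunct2, THEN conjunct2, THEN conjunct1]
  and cod2_law = axioms[THEN conjunct2, THEN conjunct2, THEN conjunct2, THEN conjunct2, THEN conjunct1]
  and id2_law = axioms[THEN conjunct2, THEN conjunct2, THEN conjunct2, THEN conjunct2, THEN conjunct2, THEN conjunct1]
  and vc_law = axioms[THEN conjunct2, THEN conjunct2, THEN conjunct2, THEN conjunct2, THEN conjunct2, THEN conjunct2, THEN conjunct1]
  and vc_unit_law = axioms[THEN conjunct2, THEN conjunct2, THEN conjunct2, THEN conjunct2, THEN conjunct2, THEN conjunct2, THEN conjunct2, THEN conjunct1]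
  and vc_assoc_law = axioms[THEN conjunct2, THEN conjunct2, THEN conjunct2, THEN conjunct2, THEN conjunct2, THEN conjunct2, THEN conjunct2, THEN conjunct2, THEN conjunct1]
  and hc_law = axioms[THEN conjunct2, THEN conjunct2, THEN conjunct2, THEN conjunct2, THEN conjunct2, THEN conjunct2, THEN conjunct2, THEN conjunct2, THEN conjunct2, THEN conjunct1]
  and hc_unit_law = axioms[THEN conjunct2, THEN conjunct2, THEN conjunct2, THEN conjunct2, THEN conjunct2, THEN conjunct2, THEN conjunct2, THEN conjunct2, THEN conjunct2, THEN conjunct2, THEN conjunct1]
  and hc_assoc_law = axioms[THEN conjunct2, THEN conjunct2, THEN conjunct2, THEN conjunct2, THEN conjunct2, THEN conjunct2, THEN conjunct2, THEN conjunct2, THEN conjunct2, THEN conjunct2, THEN conjunct2, THEN conjunct1]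
  and hc_id2_law = axioms[THEN conjunct2, THEN conjunct2, THEN conjunct2, THEN conjunct2, THEN conjunct2, THEN conjunct2, THEN conjunct2, THEN conjunct2, THEN conjunct2, THEN conjunct2, THEN conjunct2, THEN conjunct2, THEN conjunct1]
  and interchange_law = axioms[THEN conjunct2, THEN conjunct2, THEN conjunct2, THEN conjunct2, THEN conjunct2, THEN conjunct2, THEN conjunct2, THEN conjunct2, THEN conjunct2, THEN conjunct2, THEN conjunct2, THEN conjunct2, THEN conjunct2]

lemma id1_dom[simp]: "dom1 C (id1 C k) = k" and id1_cod[simp]: "cod1 C (id1 C k) = k"
  using id1_law by auto

lemma cp1_dom[simp]: "dom1 C g = cod1 C f \<Longrightarrow> dom1 C (cp1 C g f) = dom1 C f"
  and cp1_cod[simp]: "dom1 C g = cod1 C f \<Longrightarrow> cod1 C (cp1 C g f) = cod1 C g"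
  using cp1_law by auto

lemma cp1_idr[simp]: "dom1 C f = k \<Longrightarrow> cp1 C f (id1 C k) = f"
  and cp1_idl[simp]: "cod1 C f = k \<Longrightarrow> cp1 C (id1 C k) f = f"
  using cp1_unit_law by auto

lemma cp1_assoc[simp]: "dom1 C h = cod1 C g \<Longrightarrow> dom1 C g = cod1 C f \<Longrightarrow>
   cp1 C (cp1 C h g) f = cp1 C h (cp1 C g f)"
  using cp1_assoc_law by auto

lemma dom1_cod2[simp]: "dom1 C (cod2 C \<alpha>) = dom1 C (dom2 C \<alpha>)"
  and cod1_cod2[simp]: "cod1 C (cod2 C \<alpha>) = cod1 C (dom2 C \<alpha>)"
  using cod2_law by auto

lemma id2_dom[simp]: "dom2 C (id2 C f) = f" and id2_cod[simp]: "cod2 C (id2 C f) = f"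
  using id2_law by auto

lemma vc_dom[simp]: "dom2 C \<beta> = cod2 C \<alpha> \<Longrightarrow> dom2 C (vc C \<beta> \<alpha>) = dom2 C \<alpha>"
  and vc_cod[simp]: "dom2 C \<beta> = cod2 C \<alpha> \<Longrightarrow> cod2 C (vc C \<beta> \<alpha>) = cod2 C \<beta>"
  using vc_law by auto

lemma vc_idl[simp]: "cod2 C \<alpha> = A \<Longrightarrow> vc C (id2 C A) \<alpha> = \<alpha>"
  and vc_idr[simp]: "dom2 C \<alpha> = A \<Longrightarrow> vc C \<alpha> (id2 C A) = \<alpha>"
  using vc_unit_law by auto

lemma vc_assoc[simp]: "dom2 C \<gamma> = cod2 C \<beta> \<Longrightarrow> dom2 C \<beta> = cod2 C \<alpha> \<Longrightarrow>
    vc C (vc C \<gamma> \<beta>) \<alpha> = vc C \<gamma> (vc C \<beta> \<alpha>)"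
  using vc_assoc_law by auto

lemma hc_dom: "dom1 C (dom2 C \<beta>) = cod1 C (dom2 C \<alpha>) \<Longrightarrow>
        dom2 C (hc C \<beta> \<alpha>) = cp1 C (dom2 C \<beta>) (dom2 C \<alpha>)"
  and hc_cod: "dom1 C (dom2 C \<beta>) = cod1 C (dom2 C \<alpha>) \<Longrightarrow>
        cod2 C (hc C \<beta> \<alpha>) = cp1 C (cod2 C \<beta>) (cod2 C \<alpha>)"
  using hc_law by auto

lemma hc_idr: "hc C \<alpha> (id2 C (id1 C (dom1 C (dom2 C \<alpha>)))) = \<alpha>"
  and hc_idl: "hc C (id2 C (id1 C (cod1 C (dom2 C \<alpha>)))) \<alpha> = \<alpha>"
  using hc_unit_law by auto

lemma hc_assoc: "dom1 C (dom2 C \<gamma>) = cod1 C (dom2 C \<beta>) \<Longrightarrow>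
        dom1 C (dom2 C \<beta>) = cod1 C (dom2 C \<alpha>) \<Longrightarrow>
        hc C (hc C \<gamma> \<beta>) \<alpha> = hc C \<gamma> (hc C \<beta> \<alpha>)"
  using hc_assoc_law by auto

lemma hc_id2: "dom1 C g = cod1 C f \<Longrightarrow> hc C (id2 C g) (id2 C f) = id2 C (cp1 C g f)"
  using hc_id2_law by auto

lemma interchange: "dom2 C \<beta>' = cod2 C \<beta> \<Longrightarrow> dom2 C \<alpha>' = cod2 C \<alpha> \<Longrightarrow>
        dom1 C (dom2 C \<beta>) = cod1 C (dom2 C \<alpha>) \<Longrightarrow>
        hc C (vc C \<beta>' \<beta>) (vc C \<alpha>' \<alpha>) = vc C (hc C \<beta>' \<alpha>') (hc C \<beta> \<alpha>)"
  using interchange_law by blast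

lemma lw_dom[simp]: "dom1 C f = cod1 C (dom2 C \<alpha>) \<Longrightarrow> dom2 C (lw C f \<alpha>) = cp1 C f (dom2 C \<alpha>)"
  and lw_cod[simp]: "dom1 C f = cod1 C (dom2 C \<alpha>) \<Longrightarrow> cod2 C (lw C f \<alpha>) = cp1 C f (cod2 C \<alpha>)"
  unfolding lw_def by (simp_all add: hc_dom hc_cod)

lemma rw_dom[simp]: "dom1 C (dom2 C \<alpha>) = cod1 C f \<Longrightarrow> dom2 C (rw C \<alpha> f) = cp1 C (dom2 C \<alpha>) f"
  and rw_cod[simp]: "dom1 C (dom2 C \<alpha>) = cod1 C f \<Longrightarrow> cod2 C (rw C \<alpha> f) = cp1 C (cod2 C \<alpha>) f"
  unfolding rw_def by (simp_all add: hc_dom hc_cod)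

lemma lw_vc[simp]: "dom2 C \<beta> = cod2 C \<alpha> \<Longrightarrow> dom1 C f = cod1 C (dom2 C \<alpha>) \<Longrightarrow>
   lw C f (vc C \<beta> \<alpha>) = vc C (lw C f \<beta>) (lw C f \<alpha>)"
  unfolding lw_def using interchange[of "id2 C f" "id2 C f" \<beta> \<alpha>] by simp

lemma rw_vc[simp]: "dom2 C \<beta> = cod2 C \<alpha> \<Longrightarrow> dom1 C (dom2 C \<alpha>) = cod1 C f \<Longrightarrow>
   rw C (vc C \<beta> \<alpha>) f = vc C (rw C \<beta> f) (rw C \<alpha> f)"
  unfolding rw_def using interchange[of \<beta> \<alpha> "id2 C f" "id2 C f"] by simp

lemma lw_lw[simp]: "dom1 C f = cod1 C g \<Longrightarrow> dom1 C g = cod1 C (dom2 C \<alpha>) \<Longrightarrow>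
   lw C f (lw C g \<alpha>) = lw C (cp1 C f g) \<alpha>"
  unfolding lw_def by (simp add: hc_assoc[symmetric] hc_id2)

lemma rw_rw[simp]: "dom1 C g = cod1 C f \<Longrightarrow> dom1 C (dom2 C \<alpha>) = cod1 C g \<Longrightarrow>
   rw C (rw C \<alpha> g) f = rw C \<alpha> (cp1 C g f)"
  unfolding rw_def by (simp add: hc_assoc hc_id2)

lemma lw_rw[simp]: "dom1 C f = cod1 C (dom2 C \<alpha>) \<Longrightarrow> dom1 C (dom2 C \<alpha>) = cod1 C g \<Longrightarrow>
   lw C f (rw C \<alpha> g) = rw C (lw C f \<alpha>) g"
  unfolding rw_def lw_def by (simp add: hc_assoc)

lemma lw_id2[simp]: "dom1 C f = cod1 C A \<Longrightarrow> lw C f (id2 C A) = id2 C (cp1 C f A)"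
  unfolding lw_def by (simp add: hc_id2)

lemma rw_id2[simp]: "dom1 C A = cod1 C f \<Longrightarrow> rw C (id2 C A) f = id2 C (cp1 C A f)"
  unfolding rw_def by (simp add: hc_id2)

lemma lw_id1[simp]: "cod1 C (dom2 C \<alpha>) = k \<Longrightarrow> lw C (id1 C k) \<alpha> = \<alpha>"
  unfolding lw_def by (metis hc_idl)

lemma rw_id1[simp]: "dom1 C (dom2 C \<alpha>) = k \<Longrightarrow> rw C \<alpha> (id1 C k) = \<alpha>"
  unfolding rw_def by (metis hc_idr)

text \<open>Both sides equal the horizontal composite \<open>\<alpha>\<beta>\<close>.\<close>

lemma whisker_exchange: "dom1 C (dom2 C \<alpha>) = cod1 C (dom2 C \<beta>) \<Longrightarrow>
   vc C (rw C \<alpha> (cod2 C \<beta>)) (lw C (dom2 C \<alpha>) \<beta>) = vc C (lw C (cod2 C \<alpha>) \<beta>) (rw C \<alpha> (dom2 C \<beta>))"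
proof -
  assume a: "dom1 C (dom2 C \<alpha>) = cod1 C (dom2 C \<beta>)"
  have "hc C \<alpha> \<beta> = hc C (vc C \<alpha> (id2 C (dom2 C \<alpha>))) (vc C (id2 C (cod2 C \<beta>)) \<beta>)" by simp
  also have "\<dots> = vc C (rw C \<alpha> (cod2 C \<beta>)) (lw C (dom2 C \<alpha>) \<beta>)"
    unfolding rw_def lw_def using a interchange[of \<alpha> "id2 C (dom2 C \<alpha>)" "id2 C (cod2 C \<beta>)" \<beta>] by simp
  finally have 1: "hc C \<alpha> \<beta> = \<dots>" .
  have "hc C \<alpha> \<beta> = hc C (vc C (id2 C (cod2 C \<alpha>)) \<alpha>) (vc C \<beta> (id2 C (dom2 C \<beta>)))" by simp
  also have "\<dots> = vc C (lw C (cod2 C \<alpha>) \<beta>) (rw C \<alpha> (dom2 C \<beta>))"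
    unfolding rw_def lw_def using a interchange[of "id2 C (cod2 C \<alpha>)" \<alpha> \<beta> "id2 C (dom2 C \<beta>)"] by simp
  finally show ?thesis using 1 by simp
qed

lemma vc_rewrite: "vc C a b = X \<Longrightarrow> dom2 C a = cod2 C b \<Longrightarrow> dom2 C b = cod2 C r \<Longrightarrow>
   vc C a (vc C b r) = vc C X r"
  by (simp flip: vc_assoc)

lemma vc_rewrite3: "vc C a (vc C b c) = X \<Longrightarrow> dom2 C a = cod2 C b \<Longrightarrow> dom2 C b = cod2 C c \<Longrightarrow>
   dom2 C c = cod2 C r \<Longrightarrow> vc C a (vc C b (vc C c r)) = vc C X r"
  by (simp flip: vc_assoc)

end

section \<open>The weak action of a 1-cell of \<open>EM\<^sup>w(K)\<close>\<close>

locale em_setting = two_cat C for C :: "('o,'a,'c) twocat" +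
  fixes k t \<mu> \<eta> k' t' \<mu>' \<eta>' J f v \<epsilon> J' f' v' \<epsilon>'
  assumes monad: "is_monad C k t \<mu> \<eta>" and monad': "is_monad C k' t' \<mu>' \<eta>'"
  and em: "em_object C k t \<mu> \<eta> J f v \<epsilon>" and em': "em_object C k' t' \<mu>' \<eta>' J' f' v' \<epsilon>'"
begin

lemma t_eq[simp]: "t = cp1 C v f" and mu_eq[simp]: "\<mu> = lw C v (rw C \<epsilon> f)"
  using em unfolding em_object_def by auto

lemma t'_eq: "t' = cp1 C v' f'"
  using em' unfolding em_object_def by auto

lemma em_types[simp]: "dom1 C v = J" "cod1 C v = k" "dom1 C f = k" "cod1 C f = J"
   "dom2 C \<epsilon> = cp1 C f v" "cod2 C \<epsilon> = id1 C J"
   "dom1 C v' = J'" "cod1 C v' = k'" "dom1 C f' = k'" "cod1 C f' = J'"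
   "dom2 C \<epsilon>' = cp1 C f' v'" "cod2 C \<epsilon>' = id1 C J'"
  using em em' unfolding em_object_def hom1_def hom2_def by auto

lemma monad_types[simp]: "dom2 C \<eta> = id1 C k" "cod2 C \<eta> = cp1 C v f"
   "dom1 C t' = k'" "cod1 C t' = k'" "dom2 C \<mu>' = cp1 C t' t'" "cod2 C \<mu>' = t'"
   "dom2 C \<eta>' = id1 C k'" "cod2 C \<eta>' = t'"
  using monad monad' unfolding is_monad_def hom1_def hom2_def by auto

lemma triangle_f: "vc C (rw C \<epsilon> f) (lw C f \<eta>) = id2 C f"
  using em unfolding em_object_def by auto

lemma mu'_units: "vc C \<mu>' (rw C \<eta>' t') = id2 C t'" "vc C \<mu>' (lw C t' \<eta>') = id2 C t'"
  using monad' unfolding is_monad_def by auto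

lemma mu'_eta'_whisker: "cod1 C X = k' \<Longrightarrow>
    vc C (rw C \<mu>' X) (rw C \<eta>' (cp1 C t' X)) = id2 C (cp1 C t' X)"
  using arg_cong[OF mu'_units(1), of "\<lambda>x. rw C x X"] by simp

lemma mu'_t'eta'_whisker: "cod1 C X = k' \<Longrightarrow>
    vc C (rw C \<mu>' X) (rw C (lw C t' \<eta>') X) = id2 C (cp1 C t' X)"
  using arg_cong[OF mu'_units(2), of "\<lambda>x. rw C x X"] by simp

lemma eps_eps: "vc C \<epsilon> (lw C (cp1 C f v) \<epsilon>) = vc C \<epsilon> (rw C \<epsilon> (cp1 C f v))"
  using whisker_exchange[of \<epsilon> \<epsilon>] by simp

lemma em'_alg_lift: "is_alg C l k' t' \<mu>' \<eta>' A \<alpha> \<Longrightarrow>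
    \<exists>!X. hom1 C X l J' \<and> cp1 C v' X = A \<and> lw C v' (rw C \<epsilon>' X) = \<alpha>"
  using em' unfolding em_object_def by blast

lemma em'_alg_mor_lift: "hom1 C X l J' \<Longrightarrow> hom1 C Y l J' \<Longrightarrow>
   alg_mor C t' (cp1 C v' X) (lw C v' (rw C \<epsilon>' X)) (cp1 C v' Y) (lw C v' (rw C \<epsilon>' Y)) \<rho> \<Longrightarrow>
   \<exists>!\<omega>. hom2 C \<omega> X Y \<and> lw C v' \<omega> = \<rho>"
  using em' unfolding em_object_def by blast

lemma v'_alg_mor:
  assumes "hom1 C X l J'" "hom1 C Y l J'" "hom2 C \<theta> X Y"
  shows "alg_mor C t' (cp1 C v' X) (lw C v' (rw C \<epsilon>' X)) (cp1 C v' Y) (lw C v' (rw C \<epsilon>' Y)) (lw C v' \<theta>)"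
proof -
  have h: "dom1 C X = l" "cod1 C X = J'" "dom1 C Y = l" "cod1 C Y = J'" "dom2 C \<theta> = X" "cod2 C \<theta> = Y"
    using assms unfolding hom1_def hom2_def by auto
  have "vc C (rw C \<epsilon>' Y) (lw C (cp1 C f' v') \<theta>) = vc C \<theta> (rw C \<epsilon>' X)"
    using whisker_exchange[of \<epsilon>' \<theta>] h by simp
  from arg_cong[OF this, of "lw C v'"]
  have "vc C (lw C v' (rw C \<epsilon>' Y)) (lw C (cp1 C v' (cp1 C f' v')) \<theta>) =
      vc C (lw C v' \<theta>) (lw C v' (rw C \<epsilon>' X))"
    using h by simp
  then show ?thesis unfolding alg_mor_def hom2_def using h by (simp add: t'_eq)
qed

definition typed_emw1 :: "'a \<Rightarrow> 'c \<Rightarrow> bool" where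
  "typed_emw1 W \<phi> \<longleftrightarrow> dom1 C W = k \<and> cod1 C W = k' \<and>
     dom2 C \<phi> = cp1 C t' W \<and> cod2 C \<phi> = cp1 C W (cp1 C v f)"

text \<open>For a 1-cell \<open>(W,\<phi>)\<close> of \<open>EM\<^sup>w(K)\<close>, \<open>Wv\<epsilon> \<ast> \<phi>v : t'Wv \<Rightarrow> Wv\<close> is an associative action of \<open>t'\<close>
  on \<open>Wv\<close>, unital only up to the idempotent \<open>emw_idem\<close>, whose splitting yields the
  \<open>t'\<close>-algebra \<open>J\<^sup>w(W,\<phi>)\<close>.\<close>

definition act :: "'a \<Rightarrow> 'c \<Rightarrow> 'c" where
  "act W \<phi> = vc C (lw C (cp1 C W v) \<epsilon>) (rw C \<phi> v)"

definition act_idem :: "'a \<Rightarrow> 'c \<Rightarrow> 'c" where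
  "act_idem W \<phi> = vc C (act W \<phi>) (rw C \<eta>' (cp1 C W v))"

lemma emw1_typed: "emw1 C t \<mu> t' \<mu>' W \<phi> \<Longrightarrow> typed_emw1 W \<phi>"
  unfolding emw1_def typed_emw1_def hom1_def hom2_def by auto

lemma typed_emw1D: "typed_emw1 W \<phi> \<Longrightarrow> dom1 C W = k" "typed_emw1 W \<phi> \<Longrightarrow> cod1 C W = k'"
  "typed_emw1 W \<phi> \<Longrightarrow> dom2 C \<phi> = cp1 C t' W"
  "typed_emw1 W \<phi> \<Longrightarrow> cod2 C \<phi> = cp1 C W (cp1 C v f)"
  unfolding typed_emw1_def by auto

lemma emw1_mult: "emw1 C t \<mu> t' \<mu>' W \<phi> \<Longrightarrow>
  vc C (rw C (lw C (cp1 C W v) \<epsilon>) f) (vc C (rw C \<phi> (cp1 C v f)) (lw C t' \<phi>)) = vc C \<phi> (rw C \<mu>' W)"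
  unfolding emw1_def hom1_def hom2_def by auto

lemma act_types[simp]: "typed_emw1 W \<phi> \<Longrightarrow> dom2 C (act W \<phi>) = cp1 C t' (cp1 C W v)"
   "typed_emw1 W \<phi> \<Longrightarrow> cod2 C (act W \<phi>) = cp1 C W v"
  unfolding act_def by (simp_all add: typed_emw1D)

lemma act_idem_types[simp]: "typed_emw1 W \<phi> \<Longrightarrow> dom2 C (act_idem W \<phi>) = cp1 C W v"
   "typed_emw1 W \<phi> \<Longrightarrow> cod2 C (act_idem W \<phi>) = cp1 C W v"
  unfolding act_idem_def by (simp_all add: typed_emw1D)

lemma emw_idem_eq_act_idem: "typed_emw1 W \<phi> \<Longrightarrow> emw_idem C v \<epsilon> \<eta>' W \<phi> = act_idem W \<phi>"
  unfolding emw_idem_def act_idem_def act_def by (simp add: typed_emw1D)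

lemma phi_eps_exchange: "typed_emw1 W \<phi> \<Longrightarrow>
    vc C (rw C \<phi> v) (lw C (cp1 C t' (cp1 C W v)) \<epsilon>) =
    vc C (lw C (cp1 C W (cp1 C v (cp1 C f v))) \<epsilon>) (rw C \<phi> (cp1 C v (cp1 C f v)))"
  using whisker_exchange[of \<phi> "lw C v \<epsilon>"] by (simp add: typed_emw1D)

lemma eps_eps_whisker: "dom1 C W = k \<Longrightarrow>
    vc C (lw C (cp1 C W v) \<epsilon>) (lw C (cp1 C W (cp1 C v (cp1 C f v))) \<epsilon>) =
    vc C (lw C (cp1 C W v) \<epsilon>) (rw C (lw C (cp1 C W v) \<epsilon>) (cp1 C f v))"
  using arg_cong[OF eps_eps, of "lw C (cp1 C W v)"] by simp

lemma act_assoc: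
  assumes e: "emw1 C t \<mu> t' \<mu>' W \<phi>"
  shows "vc C (act W \<phi>) (lw C t' (act W \<phi>)) = vc C (act W \<phi>) (rw C \<mu>' (cp1 C W v))"
proof -
  have g: "typed_emw1 W \<phi>" using e by (rule emw1_typed)
  note [simp] = typed_emw1D[OF g]
  have "vc C (rw C (lw C (cp1 C W v) \<epsilon>) (cp1 C f v))
      (vc C (rw C \<phi> (cp1 C v (cp1 C f v))) (rw C (lw C t' \<phi>) v)) =
      vc C (rw C \<phi> v) (rw C \<mu>' (cp1 C W v))"
    using arg_cong[OF emw1_mult[OF e], of "\<lambda>x. rw C x v"] by simp
  then show ?thesis unfolding act_def
    by (simp add: vc_rewrite[OF phi_eps_exchange[OF g]] vc_rewrite[OF eps_eps_whisker])
qed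

lemma act_idem_act:
  assumes e: "emw1 C t \<mu> t' \<mu>' W \<phi>"
  shows "vc C (act_idem W \<phi>) (act W \<phi>) = act W \<phi>"
proof -
  have g: "typed_emw1 W \<phi>" using e by (rule emw1_typed)
  note [simp] = typed_emw1D[OF g]
  have n: "vc C (rw C \<eta>' (cp1 C W v)) (act W \<phi>) =
      vc C (lw C t' (act W \<phi>)) (rw C \<eta>' (cp1 C t' (cp1 C W v)))"
    using whisker_exchange[of \<eta>' "act W \<phi>"] g by simp
  have "vc C (act_idem W \<phi>) (act W \<phi>) = vc C (act W \<phi>) (vc C (rw C \<eta>' (cp1 C W v)) (act W \<phi>))"
    unfolding act_idem_def using g by simp
  also have "\<dots> = vc C (vc C (act W \<phi>) (lw C t' (act W \<phi>))) (rw C \<eta>' (cp1 C t' (cp1 C W v)))"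
    using g by (simp add: n)
  also have "\<dots> = vc C (act W \<phi>) (vc C (rw C \<mu>' (cp1 C W v)) (rw C \<eta>' (cp1 C t' (cp1 C W v))))"
    using g by (simp add: act_assoc[OF e])
  also have "\<dots> = act W \<phi>" using g by (simp add: mu'_eta'_whisker)
  finally show ?thesis .
qed

lemma act_t'_act_idem:
  assumes e: "emw1 C t \<mu> t' \<mu>' W \<phi>"
  shows "vc C (act W \<phi>) (lw C t' (act_idem W \<phi>)) = act W \<phi>"
proof -
  have g: "typed_emw1 W \<phi>" using e by (rule emw1_typed)
  note [simp] = typed_emw1D[OF g]
  have "vc C (act W \<phi>) (lw C t' (act_idem W \<phi>)) =
      vc C (vc C (act W \<phi>) (lw C t' (act W \<phi>))) (rw C (lw C t' \<eta>') (cp1 C W v))"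
    unfolding act_idem_def using g by simp
  also have "\<dots> = vc C (act W \<phi>) (vc C (rw C \<mu>' (cp1 C W v)) (rw C (lw C t' \<eta>') (cp1 C W v)))"
    using g by (simp add: act_assoc[OF e])
  also have "\<dots> = act W \<phi>" using g by (simp add: mu'_t'eta'_whisker)
  finally show ?thesis .
qed

definition split_act :: "'a \<Rightarrow> 'c \<Rightarrow> 'c \<Rightarrow> 'c \<Rightarrow> 'c" where
  "split_act W \<phi> \<iota> \<pi> = vc C \<pi> (vc C (act W \<phi>) (lw C t' \<iota>))"

lemma emw_splittingD:
  assumes g: "typed_emw1 W \<phi>" and s: "is_splitting C (emw_idem C v \<epsilon> \<eta>' W \<phi>) Wt \<pi> \<iota>"
  shows "dom2 C \<pi> = cp1 C W v" "cod2 C \<pi> = Wt" "dom2 C \<iota> = Wt" "cod2 C \<iota> = cp1 C W v"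
    "vc C \<iota> \<pi> = act_idem W \<phi>" "vc C \<pi> \<iota> = id2 C Wt" "dom1 C Wt = J" "cod1 C Wt = k'"
proof -
  have s': "is_splitting C (act_idem W \<phi>) Wt \<pi> \<iota>" using s emw_idem_eq_act_idem[OF g] by simp
  show 1: "dom2 C \<pi> = cp1 C W v" "cod2 C \<pi> = Wt" "dom2 C \<iota> = Wt" "cod2 C \<iota> = cp1 C W v"
    "vc C \<iota> \<pi> = act_idem W \<phi>" "vc C \<pi> \<iota> = id2 C Wt"
    using s' g unfolding is_splitting_def hom2_def by auto
  have "dom1 C Wt = dom1 C (cp1 C W v)" "cod1 C Wt = cod1 C (cp1 C W v)"
    using dom1_cod2[of \<pi>] cod1_cod2[of \<pi>] 1 by simp_all
  then show "dom1 C Wt = J" "cod1 C Wt = k'" using g by (simp_all add: typed_emw1D)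
qed

lemma split_act_is_alg:
  assumes e: "emw1 C t \<mu> t' \<mu>' W \<phi>" and s: "is_splitting C (emw_idem C v \<epsilon> \<eta>' W \<phi>) Wt \<pi> \<iota>"
  shows "is_alg C J k' t' \<mu>' \<eta>' Wt (split_act W \<phi> \<iota> \<pi>)"
proof -
  have g: "typed_emw1 W \<phi>" using e by (rule emw1_typed)
  note [simp] = typed_emw1D[OF g] emw_splittingD(1-4,7,8)[OF g s]
  have ip: "vc C \<iota> (vc C \<pi> r) = vc C (act_idem W \<phi>) r" if "cod2 C r = cp1 C W v" for r
    using that by (simp add: vc_rewrite[OF emw_splittingD(5)[OF g s]])
  have pi: "vc C \<pi> (vc C \<iota> r) = r" if "cod2 C r = Wt" for r
    using that by (simp add: vc_rewrite[OF emw_splittingD(6)[OF g s]])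
  have t_ip: "vc C (lw C t' \<iota>) (lw C t' \<pi>) = lw C t' (act_idem W \<phi>)"
    using arg_cong[OF emw_splittingD(5)[OF g s], of "lw C t'"] g by simp
  have unit: "vc C (split_act W \<phi> \<iota> \<pi>) (rw C \<eta>' Wt) = id2 C Wt"
  proof -
    have "vc C (rw C \<eta>' (cp1 C W v)) \<iota> = vc C (lw C t' \<iota>) (rw C \<eta>' Wt)"
      using whisker_exchange[of \<eta>' \<iota>] by simp
    then have "vc C (split_act W \<phi> \<iota> \<pi>) (rw C \<eta>' Wt) =
        vc C \<pi> (vc C (act W \<phi>) (vc C (rw C \<eta>' (cp1 C W v)) \<iota>))"
      unfolding split_act_def using g by simp
    also have "\<dots> = vc C \<pi> (vc C (act_idem W \<phi>) \<iota>)" unfolding act_idem_def using g by simp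
    also have "\<dots> = vc C \<pi> (vc C \<iota> (vc C \<pi> \<iota>))" using g by (simp add: ip)
    also have "\<dots> = id2 C Wt" by (simp add: pi emw_splittingD(6)[OF g s])
    finally show ?thesis .
  qed
  have assoc: "vc C (split_act W \<phi> \<iota> \<pi>) (lw C t' (split_act W \<phi> \<iota> \<pi>)) =
      vc C (split_act W \<phi> \<iota> \<pi>) (rw C \<mu>' Wt)"
  proof -
    have "vc C (split_act W \<phi> \<iota> \<pi>) (lw C t' (split_act W \<phi> \<iota> \<pi>)) =
      vc C \<pi> (vc C (act W \<phi>) (vc C (vc C (lw C t' \<iota>) (lw C t' \<pi>))
        (vc C (lw C t' (act W \<phi>)) (lw C (cp1 C t' t') \<iota>))))"
      unfolding split_act_def using g by simp
    also have "\<dots> = vc C \<pi> (vc C (vc C (act W \<phi>) (lw C t' (act_idem W \<phi>)))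
        (vc C (lw C t' (act W \<phi>)) (lw C (cp1 C t' t') \<iota>)))"
      unfolding t_ip using g by simp
    also have "\<dots> = vc C \<pi> (vc C (vc C (act W \<phi>) (lw C t' (act W \<phi>))) (lw C (cp1 C t' t') \<iota>))"
      unfolding act_t'_act_idem[OF e] using g by simp
    also have "\<dots> = vc C \<pi> (vc C (act W \<phi>) (vc C (rw C \<mu>' (cp1 C W v)) (lw C (cp1 C t' t') \<iota>)))"
      unfolding act_assoc[OF e] using g by simp
    also have "\<dots> = vc C (split_act W \<phi> \<iota> \<pi>) (rw C \<mu>' Wt)"
      using whisker_exchange[of \<mu>' \<iota>] g by (simp add: split_act_def)
    finally show ?thesis .
  qed
  show ?thesis unfolding is_alg_def hom1_def hom2_def using unit assoc g
    unfolding split_act_def by simp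
qed

lemma Jw1_spec:
  assumes e: "emw1 C t \<mu> t' \<mu>' W \<phi>" and s: "is_splitting C (emw_idem C v \<epsilon> \<eta>' W \<phi>) Wt \<pi> \<iota>"
  shows "hom1 C (Jw1 C v \<epsilon> t' v' \<epsilon>' J J' W \<phi> Wt \<pi> \<iota>) J J' \<and>
     cp1 C v' (Jw1 C v \<epsilon> t' v' \<epsilon>' J J' W \<phi> Wt \<pi> \<iota>) = Wt \<and>
     lw C v' (rw C \<epsilon>' (Jw1 C v \<epsilon> t' v' \<epsilon>' J J' W \<phi> Wt \<pi> \<iota>)) = split_act W \<phi> \<iota> \<pi>"
proof -
  have g: "typed_emw1 W \<phi>" using e by (rule emw1_typed)
  have "vc C \<pi> (vc C (lw C (cp1 C W v) \<epsilon>) (vc C (rw C \<phi> v) (lw C t' \<iota>))) = split_act W \<phi> \<iota> \<pi>"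
    unfolding split_act_def act_def using g emw_splittingD[OF g s] by (simp add: typed_emw1D)
  then show ?thesis unfolding Jw1_def using theI'[OF em'_alg_lift[OF split_act_is_alg[OF e s]]]
    by simp
qed
end

section \<open>Comparing conditions on a 2-cell between split weak actions\<close>

text \<open>An abstraction of the situation at hand: \<open>bV\<close>, \<open>bW\<close> stand for the weak actions of \<open>t'\<close>
  on \<open>Vv\<close>, \<open>Wv\<close>, \<open>eV\<close>, \<open>eW\<close> for their idempotents with splittings \<open>(pV, iV)\<close>, \<open>(pW, iW)\<close>,
  and \<open>w\<close> for \<open>\<omega>v\<close>. All conditions of the proposition translate into conditions on \<open>w\<close>.\<close>

locale split_weak_actions = two_cat C for C :: "('o,'a,'c) twocat" +
  fixes k' t' \<eta>' AV AW VT WT bV eV bW eW w iV pV iW pW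
  assumes types[simp]: "dom1 C t' = k'" "cod1 C t' = k'" "dom2 C \<eta>' = id1 C k'" "cod2 C \<eta>' = t'"
    "cod1 C AV = k'" "cod1 C AW = k'" "cod1 C VT = k'" "cod1 C WT = k'"
    "dom2 C bV = cp1 C t' AV" "cod2 C bV = AV" "dom2 C eV = AV" "cod2 C eV = AV"
    "dom2 C bW = cp1 C t' AW" "cod2 C bW = AW" "dom2 C eW = AW" "cod2 C eW = AW"
    "dom2 C w = AV" "cod2 C w = AW"
    "dom2 C iV = VT" "cod2 C iV = AV" "dom2 C pV = AV" "cod2 C pV = VT"
    "dom2 C iW = WT" "cod2 C iW = AW" "dom2 C pW = AW" "cod2 C pW = WT"
  and eV_bV: "vc C eV bV = bV" and bV_t'eV: "vc C bV (lw C t' eV) = bV"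
  and bV_eta': "vc C bV (rw C \<eta>' AV) = eV"
  and iV_pV: "vc C iV pV = eV" and pV_iV: "vc C pV iV = id2 C VT"
  and eW_bW: "vc C eW bW = bW" and bW_t'eW: "vc C bW (lw C t' eW) = bW"
  and bW_eta': "vc C bW (rw C \<eta>' AW) = eW"
  and iW_pW: "vc C iW pW = eW" and pW_iW: "vc C pW iW = id2 C WT"
begin

lemma eV_idem: "vc C eV eV = eV" and eW_idem: "vc C eW eW = eW"
  and eV_iV: "vc C eV iV = iV" and eW_iW: "vc C eW iW = iW"
  and pV_eV: "vc C pV eV = pV" and pW_eW: "vc C pW eW = pW"
  by (simp_all add: iV_pV[symmetric] iW_pW[symmetric] vc_rewrite[OF pV_iV] vc_rewrite[OF pW_iW]
      pV_iV pW_iW)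

lemma t'_iV_pV: "vc C (lw C t' iV) (lw C t' pV) = lw C t' eV"
  and t'_iW_pW: "vc C (lw C t' iW) (lw C t' pW) = lw C t' eW"
  and t'_eV_iV: "vc C (lw C t' eV) (lw C t' iV) = lw C t' iV"
  and t'_eW_iW: "vc C (lw C t' eW) (lw C t' iW) = lw C t' iW"
  and t'_eV_idem: "vc C (lw C t' eV) (lw C t' eV) = lw C t' eV"
  and t'_eW_idem: "vc C (lw C t' eW) (lw C t' eW) = lw C t' eW"
  by (simp_all flip: lw_vc add: iV_pV iW_pW eV_iV eW_iW eV_idem eW_idem)

lemma eta'_w: "vc C (rw C \<eta>' AW) w = vc C (lw C t' w) (rw C \<eta>' AV)"
  using whisker_exchange[of \<eta>' w] by simp

lemma eta'_eV: "vc C (rw C \<eta>' AV) eV = vc C (lw C t' eV) (rw C \<eta>' AV)"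
  using whisker_exchange[of \<eta>' eV] by simp

lemmas split_eqs = eV_bV bV_t'eV bV_eta' iV_pV pV_iV eW_bW bW_t'eW bW_eta' iW_pW pW_iW
  eV_idem eW_idem eV_iV eW_iW pV_eV pW_eW t'_iV_pV t'_iW_pW t'_eV_iV t'_eW_iW t'_eV_idem t'_eW_idem

lemmas split_simps = split_eqs split_eqs[THEN vc_rewrite]

definition "iota_cond \<longleftrightarrow> vc C w bV = vc C bW (vc C (lw C t' w) (lw C t' eV))"
definition "pi_cond \<longleftrightarrow> vc C bW (lw C t' w) = vc C eW (vc C w bV)"
definition "strict_cond \<longleftrightarrow> vc C bW (lw C t' w) = vc C w bV"
definition "mor_cond \<longleftrightarrow> vc C bW (vc C (lw C t' w) (lw C t' eV)) = vc C eW (vc C w bV)"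
definition "split_mor_cond \<longleftrightarrow>
    vc C (vc C pW (vc C bW (lw C t' iW))) (lw C t' (vc C pW (vc C w iV))) =
    vc C (vc C pW (vc C w iV)) (vc C pV (vc C bV (lw C t' iV)))"

text \<open>\<open>w\<close> maps the image of \<open>eV\<close> into that of \<open>eW\<close>, resp.\ the kernel of \<open>eV\<close> into that of \<open>eW\<close>.\<close>

definition "image_cond \<longleftrightarrow> vc C eW (vc C w eV) = vc C w eV"
definition "kernel_cond \<longleftrightarrow> vc C eW (vc C w eV) = vc C eW w"
definition "idem_comm \<longleftrightarrow> vc C eW w = vc C w eV"

lemma iota_cond_iff: "iota_cond \<longleftrightarrow> mor_cond \<and> image_cond"
proof
  assume "iota_cond"
  then have s: "vc C bW (vc C (lw C t' w) (lw C t' eV)) = vc C w bV"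
    unfolding iota_cond_def by simp
  have "vc C eW (vc C w eV) = vc C bW (vc C (rw C \<eta>' AW) (vc C w eV))" by (simp add: split_simps)
  also have "\<dots> = vc C bW (vc C (lw C t' w) (vc C (rw C \<eta>' AV) eV))"
    by (simp add: vc_rewrite[OF eta'_w])
  also have "\<dots> = vc C bW (vc C (lw C t' w) (vc C (lw C t' eV) (rw C \<eta>' AV)))"
    by (simp add: eta'_eV)
  also have "\<dots> = vc C w (vc C bV (rw C \<eta>' AV))" by (simp add: vc_rewrite3[OF s])
  also have "\<dots> = vc C w eV" by (simp add: split_simps)
  finally have c: "vc C eW (vc C w eV) = vc C w eV" .
  have "vc C eW (vc C w bV) = vc C eW (vc C w (vc C eV bV))" by (simp add: split_simps)
  also have "\<dots> = vc C w (vc C eV bV)" by (simp add: vc_rewrite3[OF c])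
  also have "\<dots> = vc C bW (vc C (lw C t' w) (lw C t' eV))" by (simp add: s split_simps)
  finally show "mor_cond \<and> image_cond" unfolding mor_cond_def image_cond_def using c by simp
next
  assume "mor_cond \<and> image_cond"
  then have a: "vc C bW (vc C (lw C t' w) (lw C t' eV)) = vc C eW (vc C w bV)"
    and c: "vc C eW (vc C w eV) = vc C w eV"
    unfolding mor_cond_def image_cond_def by auto
  have "vc C w bV = vc C w (vc C eV bV)" by (simp add: split_simps)
  also have "\<dots> = vc C eW (vc C w (vc C eV bV))" by (simp add: vc_rewrite3[OF c])
  also have "\<dots> = vc C bW (vc C (lw C t' w) (lw C t' eV))" by (simp add: a split_simps)
  finally show "iota_cond" unfolding iota_cond_def .
qed

lemma pi_cond_iff: "pi_cond \<longleftrightarrow> mor_cond \<and> kernel_cond"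
proof
  assume "pi_cond"
  then have s: "vc C bW (lw C t' w) = vc C eW (vc C w bV)" unfolding pi_cond_def .
  have "vc C eW (vc C w eV) = vc C eW (vc C w (vc C bV (rw C \<eta>' AV)))" by (simp add: split_simps)
  also have "\<dots> = vc C bW (vc C (lw C t' w) (rw C \<eta>' AV))" by (simp add: vc_rewrite3[OF s[symmetric]])
  also have "\<dots> = vc C bW (vc C (rw C \<eta>' AW) w)" by (simp add: eta'_w)
  also have "\<dots> = vc C eW w" by (simp add: split_simps)
  finally have "kernel_cond" unfolding kernel_cond_def .
  moreover have "vc C bW (vc C (lw C t' w) (lw C t' eV)) = vc C eW (vc C w (vc C bV (lw C t' eV)))"
    by (simp add: vc_rewrite[OF s])
  then have "mor_cond" unfolding mor_cond_def by (simp add: split_simps)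
  ultimately show "mor_cond \<and> kernel_cond" by simp
next
  assume "mor_cond \<and> kernel_cond"
  then have a: "vc C bW (vc C (lw C t' w) (lw C t' eV)) = vc C eW (vc C w bV)"
    and c: "vc C eW w = vc C eW (vc C w eV)"
    unfolding mor_cond_def kernel_cond_def by auto
  have "vc C bW (lw C t' w) = vc C bW (lw C t' (vc C eW w))" by (simp add: split_simps)
  also have "\<dots> = vc C bW (lw C t' (vc C eW (vc C w eV)))" unfolding c ..
  also have "\<dots> = vc C eW (vc C w bV)" by (simp add: a split_simps)
  finally show "pi_cond" unfolding pi_cond_def .
qed

lemma idem_comm_iff: "idem_comm \<longleftrightarrow> image_cond \<and> kernel_cond"
proof
  assume "idem_comm"
  then have c: "vc C w eV = vc C eW w" unfolding idem_comm_def by simp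
  have "vc C eW (vc C w eV) = vc C w eV" "vc C eW (vc C w eV) = vc C eW w"
    unfolding c by (simp_all add: split_simps)
  then show "image_cond \<and> kernel_cond" unfolding image_cond_def kernel_cond_def by simp
next
  assume "image_cond \<and> kernel_cond"
  then show "idem_comm" unfolding image_cond_def kernel_cond_def idem_comm_def by metis
qed

lemma strict_cond_iff: "strict_cond \<longleftrightarrow> iota_cond \<and> pi_cond"
proof
  assume "strict_cond"
  then have s: "vc C bW (lw C t' w) = vc C w bV" unfolding strict_cond_def .
  have "vc C eW w = vc C bW (vc C (rw C \<eta>' AW) w)" by (simp add: split_simps)
  also have "\<dots> = vc C bW (vc C (lw C t' w) (rw C \<eta>' AV))" by (simp add: eta'_w)
  also have "\<dots> = vc C w eV" by (simp add: vc_rewrite[OF s] split_simps)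
  finally have c: "vc C eW w = vc C w eV" .
  have "vc C bW (vc C (lw C t' w) (lw C t' eV)) = vc C w bV"
    by (simp add: vc_rewrite[OF s] split_simps)
  moreover have "vc C eW (vc C w bV) = vc C bW (lw C t' w)"
    by (simp add: vc_rewrite[OF c] s split_simps)
  ultimately show "iota_cond \<and> pi_cond" unfolding iota_cond_def pi_cond_def by simp
next
  assume s: "iota_cond \<and> pi_cond"
  then have "idem_comm" using iota_cond_iff pi_cond_iff idem_comm_iff by blast
  then have c: "vc C eW w = vc C w eV" unfolding idem_comm_def .
  have "vc C bW (lw C t' w) = vc C eW (vc C w bV)" using s unfolding pi_cond_def by simp
  also have "\<dots> = vc C w bV" by (simp add: vc_rewrite[OF c] split_simps)
  finally show "strict_cond" unfolding strict_cond_def .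
qed

lemma split_mor_cond_iff: "split_mor_cond \<longleftrightarrow> mor_cond"
proof -
  have "split_mor_cond \<longleftrightarrow> vc C pW (vc C bW (vc C (lw C t' w) (lw C t' iV))) =
      vc C pW (vc C w (vc C bV (lw C t' iV)))"
    unfolding split_mor_cond_def by (simp add: split_simps)
  also have "\<dots> \<longleftrightarrow> mor_cond"
  proof
    assume e: "vc C pW (vc C bW (vc C (lw C t' w) (lw C t' iV))) =
        vc C pW (vc C w (vc C bV (lw C t' iV)))"
    have "vc C iW (vc C (vc C pW (vc C bW (vc C (lw C t' w) (lw C t' iV)))) (lw C t' pV)) =
        vc C iW (vc C (vc C pW (vc C w (vc C bV (lw C t' iV)))) (lw C t' pV))" unfolding e ..
    then show "mor_cond" unfolding mor_cond_def by (simp add: split_simps)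
  next
    assume a: "mor_cond"
    have "vc C pW (vc C bW (vc C (lw C t' w) (lw C t' iV))) =
        vc C pW (vc C bW (vc C (lw C t' w) (vc C (lw C t' eV) (lw C t' iV))))"
      by (simp add: split_simps)
    also have "\<dots> = vc C pW (vc C eW (vc C w (vc C bV (lw C t' iV))))"
      by (simp add: vc_rewrite3[OF a[unfolded mor_cond_def]])
    also have "\<dots> = vc C pW (vc C w (vc C bV (lw C t' iV)))" by (simp add: split_simps)
    finally show "vc C pW (vc C bW (vc C (lw C t' w) (lw C t' iV))) =
        vc C pW (vc C w (vc C bV (lw C t' iV)))" .
  qed
  finally show ?thesis .
qed

lemma image_cond_split_iff: "vc C iW (vc C pW (vc C w iV)) = vc C w iV \<longleftrightarrow> image_cond"
proof
  assume e: "vc C iW (vc C pW (vc C w iV)) = vc C w iV"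
  have "vc C (vc C iW (vc C pW (vc C w iV))) pV = vc C (vc C w iV) pV" unfolding e ..
  then show "image_cond" unfolding image_cond_def by (simp add: split_simps)
next
  assume "image_cond"
  then have c: "vc C eW (vc C w eV) = vc C w eV" unfolding image_cond_def .
  have "vc C iW (vc C pW (vc C w iV)) = vc C eW (vc C w (vc C eV iV))" by (simp add: split_simps)
  also have "\<dots> = vc C w (vc C eV iV)" by (simp add: vc_rewrite3[OF c])
  also have "\<dots> = vc C w iV" by (simp add: split_simps)
  finally show "vc C iW (vc C pW (vc C w iV)) = vc C w iV" .
qed

lemma kernel_cond_split_iff: "vc C pW (vc C w (vc C iV pV)) = vc C pW w \<longleftrightarrow> kernel_cond"
proof
  assume e: "vc C pW (vc C w (vc C iV pV)) = vc C pW w"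
  have "vc C iW (vc C pW (vc C w (vc C iV pV))) = vc C iW (vc C pW w)" unfolding e ..
  then show "kernel_cond" unfolding kernel_cond_def by (simp add: split_simps)
next
  assume "kernel_cond"
  then have "vc C pW (vc C eW (vc C w eV)) = vc C pW (vc C eW w)" unfolding kernel_cond_def by simp
  then show "vc C pW (vc C w (vc C iV pV)) = vc C pW w" by (simp add: split_simps)
qed

lemma idem_comm_split_iff: "vc C iW (vc C pW w) = vc C w (vc C iV pV) \<longleftrightarrow> idem_comm"
  unfolding idem_comm_def by (simp add: split_simps)

end

section \<open>Transposition along the adjunction \<open>f \<stileturn> v\<close>\<close>

context em_setting
begin

text \<open>The bijection \<open>K(A, Wt) \<cong> K(Av, Wv)\<close>, \<open>\<rho> \<mapsto> Wv\<epsilon> \<ast> \<rho>v\<close>, induced by \<open>f \<stileturn> v\<close>; it turns every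
  equation between 2-cells into \<open>Wt\<close> into one between 2-cells into \<open>Wv\<close>, where the weak
  action lives.\<close>

definition mate :: "'a \<Rightarrow> 'c \<Rightarrow> 'c" where
  "mate W \<rho> = vc C (lw C (cp1 C W v) \<epsilon>) (rw C \<rho> v)"

lemma mate_inverse:
  assumes "dom1 C W = k" "cod1 C W = k'" "dom2 C \<rho> = A" "cod2 C \<rho> = cp1 C W (cp1 C v f)"
    "dom1 C A = k" "cod1 C A = k'"
  shows "vc C (rw C (mate W \<rho>) f) (lw C A \<eta>) = \<rho>"
proof -
  have 1: "vc C (rw C \<rho> (cp1 C v f)) (lw C A \<eta>) = vc C (lw C (cp1 C W (cp1 C v f)) \<eta>) \<rho>"
    using whisker_exchange[of \<rho> \<eta>] assms by simp
  have 2: "vc C (rw C (lw C (cp1 C W v) \<epsilon>) f) (lw C (cp1 C W (cp1 C v f)) \<eta>) =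
      id2 C (cp1 C W (cp1 C v f))"
    using arg_cong[OF triangle_f, of "lw C (cp1 C W v)"] assms by simp
  show ?thesis unfolding mate_def using assms by (simp add: 1 vc_rewrite[OF 2])
qed

lemma mate_eq_iff:
  assumes "dom1 C W = k" "cod1 C W = k'" "dom1 C A = k" "cod1 C A = k'"
    "dom2 C \<rho>1 = A" "cod2 C \<rho>1 = cp1 C W (cp1 C v f)"
    "dom2 C \<rho>2 = A" "cod2 C \<rho>2 = cp1 C W (cp1 C v f)"
  shows "\<rho>1 = \<rho>2 \<longleftrightarrow> mate W \<rho>1 = mate W \<rho>2"
  using mate_inverse[of W \<rho>1 A] mate_inverse[of W \<rho>2 A] assms by metis

lemma mate_act_left:
  assumes g: "typed_emw1 W \<phi>"
    and "dom2 C \<rho> = A" "cod2 C \<rho> = cp1 C W (cp1 C v f)" "dom1 C A = k" "cod1 C A = k'"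
  shows "mate W (vc C (lw C W \<mu>) (vc C (rw C \<phi> t) (lw C t' \<rho>))) =
    vc C (act W \<phi>) (lw C t' (mate W \<rho>))"
  unfolding mate_def act_def using assms
  by (simp add: typed_emw1D vc_rewrite[OF eps_eps_whisker[symmetric]]
      vc_rewrite[OF phi_eps_exchange[OF g, symmetric]])

lemma mate_act_right:
  assumes "typed_emw1 W \<phi>" "typed_emw1 V \<psi>"
    and "dom2 C \<rho> = V" "cod2 C \<rho> = cp1 C W (cp1 C v f)"
  shows "mate W (vc C (lw C W \<mu>) (vc C (rw C \<rho> t) \<psi>)) = vc C (mate W \<rho>) (act V \<psi>)"
proof -
  have n: "vc C (rw C \<rho> v) (lw C (cp1 C V v) \<epsilon>) =
      vc C (lw C (cp1 C W (cp1 C v (cp1 C f v))) \<epsilon>) (rw C \<rho> (cp1 C v (cp1 C f v)))"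
    using whisker_exchange[of \<rho> "lw C v \<epsilon>"] assms by (simp add: typed_emw1D)
  show ?thesis unfolding mate_def act_def using assms
    by (simp add: typed_emw1D vc_rewrite[OF eps_eps_whisker[symmetric]] vc_rewrite[OF n[symmetric]])
qed

lemma mate_act_idem_left:
  assumes g: "typed_emw1 W \<phi>"
    and "dom2 C \<rho> = A" "cod2 C \<rho> = cp1 C W (cp1 C v f)" "dom1 C A = k" "cod1 C A = k'"
  shows "mate W (vc C (lw C W \<mu>) (vc C (rw C \<phi> t) (vc C (rw C \<eta>' (cp1 C W t)) \<rho>))) =
    vc C (act_idem W \<phi>) (mate W \<rho>)"
proof -
  have n: "vc C (rw C \<eta>' (cp1 C W v)) (lw C (cp1 C W v) \<epsilon>) =
      vc C (lw C (cp1 C t' (cp1 C W v)) \<epsilon>) (rw C \<eta>' (cp1 C W (cp1 C v (cp1 C f v))))"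
    using whisker_exchange[of \<eta>' "lw C (cp1 C W v) \<epsilon>"] g by (simp add: typed_emw1D)
  show ?thesis unfolding mate_def act_idem_def act_def using assms
    by (simp add: typed_emw1D vc_rewrite[OF eps_eps_whisker[symmetric]]
        vc_rewrite[OF phi_eps_exchange[OF g, symmetric]] vc_rewrite[OF n[symmetric]])
qed

lemma mate_whisker:
  assumes "typed_emw1 W \<phi>" "typed_emw1 V \<psi>" "dom2 C \<omega> = V" "cod2 C \<omega> = W"
    and "cod2 C \<rho> = cp1 C V (cp1 C v f)" "dom1 C (dom2 C \<rho>) = k"
  shows "mate W (vc C (rw C \<omega> t) \<rho>) = vc C (rw C \<omega> v) (mate V \<rho>)"
proof -
  have n: "vc C (rw C \<omega> v) (lw C (cp1 C V v) \<epsilon>) =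
      vc C (lw C (cp1 C W v) \<epsilon>) (rw C \<omega> (cp1 C v (cp1 C f v)))"
    using whisker_exchange[of \<omega> "lw C v \<epsilon>"] assms by (simp add: typed_emw1D)
  show ?thesis unfolding mate_def using assms
    by (simp add: typed_emw1D vc_rewrite[OF n[symmetric]])
qed

end

section \<open>Weak liftings of a 2-cell \<open>\<omega> : V \<Rightarrow> W\<close>\<close>

locale weak_lifting_setting = em_setting +
  fixes V \<psi> W \<phi> \<omega> Vt \<pi>V \<iota>V Wt \<pi>W \<iota>W
  assumes emw1_V: "emw1 C t \<mu> t' \<mu>' V \<psi>" and emw1_W: "emw1 C t \<mu> t' \<mu>' W \<phi>"
    and omega: "hom2 C \<omega> V W"
    and split_V: "is_splitting C (emw_idem C v \<epsilon> \<eta>' V \<psi>) Vt \<pi>V \<iota>V"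
    and split_W: "is_splitting C (emw_idem C v \<epsilon> \<eta>' W \<phi>) Wt \<pi>W \<iota>W"
begin

lemma typed_V: "typed_emw1 V \<psi>" and typed_W: "typed_emw1 W \<phi>"
  using emw1_V emw1_W by (simp_all add: emw1_typed)

lemma types[simp]: "dom1 C V = k" "cod1 C V = k'" "dom2 C \<psi> = cp1 C t' V"
  "cod2 C \<psi> = cp1 C V (cp1 C v f)"
  "dom1 C W = k" "cod1 C W = k'" "dom2 C \<phi> = cp1 C t' W" "cod2 C \<phi> = cp1 C W (cp1 C v f)"
  "dom2 C \<omega> = V" "cod2 C \<omega> = W"
  using typed_emw1D[OF typed_V] typed_emw1D[OF typed_W] omega unfolding hom2_def by auto

lemmas splitting_types[simp] =
  emw_splittingD(1-4,7,8)[OF typed_V split_V] emw_splittingD(1-4,7,8)[OF typed_W split_W]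

sublocale acts: split_weak_actions C k' t' \<eta>' "cp1 C V v" "cp1 C W v" Vt Wt
   "act V \<psi>" "act_idem V \<psi>" "act W \<phi>" "act_idem W \<phi>" "rw C \<omega> v" \<iota>V \<pi>V \<iota>W \<pi>W
  using typed_V typed_W emw_splittingD(5,6)[OF typed_V split_V] emw_splittingD(5,6)[OF typed_W split_W]
  by unfold_locales (simp_all add: act_idem_act[OF emw1_V] act_t'_act_idem[OF emw1_V]
      act_idem_act[OF emw1_W] act_t'_act_idem[OF emw1_W], simp_all add: act_idem_def)

abbreviation "\<rho>1 \<equiv> vc C (rw C \<omega> t) (vc C \<psi> (rw C \<eta>' V))"
abbreviation "\<rho>2 \<equiv> vc C \<phi> (vc C (rw C \<eta>' W) \<omega>)"

lemma mate_omega_psi: "mate W (vc C (rw C \<omega> t) \<psi>) = vc C (rw C \<omega> v) (act V \<psi>)"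
proof -
  have "mate W (vc C (rw C \<omega> t) \<psi>) = vc C (rw C \<omega> v) (mate V \<psi>)"
    by (rule mate_whisker[OF typed_W typed_V]) simp_all
  then show ?thesis unfolding mate_def act_def .
qed

lemma mate_rho1: "mate W \<rho>1 = vc C (rw C \<omega> v) (act_idem V \<psi>)"
proof -
  have "mate W \<rho>1 = vc C (rw C \<omega> v) (mate V (vc C \<psi> (rw C \<eta>' V)))"
    by (rule mate_whisker[OF typed_W typed_V]) simp_all
  also have "mate V (vc C \<psi> (rw C \<eta>' V)) = act_idem V \<psi>"
    unfolding mate_def act_idem_def act_def by simp
  finally show ?thesis .
qed

lemma mate_rho2: "mate W \<rho>2 = vc C (act_idem W \<phi>) (rw C \<omega> v)"
  unfolding mate_def act_idem_def act_def by simp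

lemma mate_phi_omega: "mate W (vc C \<phi> (lw C t' \<omega>)) = vc C (act W \<phi>) (lw C t' (rw C \<omega> v))"
  unfolding mate_def act_def by simp

lemma eq_iff_mate_from_t'V: "dom2 C \<rho> = cp1 C t' V \<Longrightarrow> dom2 C \<rho>' = cp1 C t' V \<Longrightarrow>
   cod2 C \<rho> = cp1 C W (cp1 C v f) \<Longrightarrow> cod2 C \<rho>' = cp1 C W (cp1 C v f) \<Longrightarrow>
   \<rho> = \<rho>' \<longleftrightarrow> mate W \<rho> = mate W \<rho>'"
  by (rule mate_eq_iff[where A = "cp1 C t' V"]) simp_all

lemma eq_iff_mate_from_V: "dom2 C \<rho> = V \<Longrightarrow> dom2 C \<rho>' = V \<Longrightarrow>
   cod2 C \<rho> = cp1 C W (cp1 C v f) \<Longrightarrow> cod2 C \<rho>' = cp1 C W (cp1 C v f) \<Longrightarrow>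
   \<rho> = \<rho>' \<longleftrightarrow> mate W \<rho> = mate W \<rho>'"
  by (rule mate_eq_iff[where A = V]) simp_all

lemma c1i_iff: "(vc C (rw C \<omega> t) \<psi> =
      vc C (lw C W \<mu>) (vc C (rw C \<phi> t) (vc C (lw C t' (rw C \<omega> t))
        (vc C (lw C t' \<psi>) (lw C t' (rw C \<eta>' V)))))) \<longleftrightarrow> acts.iota_cond"
proof -
  have r: "vc C (lw C W \<mu>) (vc C (rw C \<phi> t) (vc C (lw C t' (rw C \<omega> t))
      (vc C (lw C t' \<psi>) (lw C t' (rw C \<eta>' V))))) = vc C (lw C W \<mu>) (vc C (rw C \<phi> t) (lw C t' \<rho>1))"
    by simp
  have m: "mate W (vc C (lw C W \<mu>) (vc C (rw C \<phi> t) (lw C t' \<rho>1))) =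
      vc C (act W \<phi>) (lw C t' (mate W \<rho>1))"
    by (rule mate_act_left[OF typed_W, where A = V]) simp_all
  show ?thesis unfolding r
    by (subst eq_iff_mate_from_t'V) (unfold m mate_omega_psi mate_rho1 acts.iota_cond_def, simp_all)
qed

lemma c2i_iff: "(vc C \<phi> (lw C t' \<omega>) =
      vc C (lw C W \<mu>) (vc C (rw C \<phi> t) (vc C (rw C \<eta>' (cp1 C W t))
        (vc C (rw C \<omega> t) \<psi>)))) \<longleftrightarrow> acts.pi_cond"
proof -
  have m: "mate W (vc C (lw C W \<mu>) (vc C (rw C \<phi> t) (vc C (rw C \<eta>' (cp1 C W t))
      (vc C (rw C \<omega> t) \<psi>)))) = vc C (act_idem W \<phi>) (mate W (vc C (rw C \<omega> t) \<psi>))"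
    by (rule mate_act_idem_left[OF typed_W, where A = "cp1 C t' V"]) simp_all
  show ?thesis
    by (subst eq_iff_mate_from_t'V) (unfold m mate_omega_psi mate_phi_omega acts.pi_cond_def, simp_all)
qed

lemma c3i_iff: "(vc C \<phi> (lw C t' \<omega>) = vc C (rw C \<omega> t) \<psi>) \<longleftrightarrow> acts.strict_cond"
  by (subst eq_iff_mate_from_t'V) (unfold mate_omega_psi mate_phi_omega acts.strict_cond_def, simp_all)

text \<open>The second defining equation of a 2-cell of \<open>EM\<^sup>w(K)\<close> is the \<open>image_cond\<close> for \<open>\<rho>1\<close>, and
  holds automatically for \<open>\<rho>2\<close>; the first one is the respective condition itself.\<close>

lemma c1ii_iff: "emw2 C t \<mu> t' \<eta>' V \<psi> W \<phi> \<rho>1 \<longleftrightarrow> acts.iota_cond"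
proof -
  have m1: "mate W (vc C (lw C W \<mu>) (vc C (rw C \<rho>1 t) \<psi>)) = vc C (mate W \<rho>1) (act V \<psi>)"
    by (rule mate_act_right[OF typed_W typed_V]) simp_all
  have m2: "mate W (vc C (lw C W \<mu>) (vc C (rw C \<phi> t) (lw C t' \<rho>1))) =
      vc C (act W \<phi>) (lw C t' (mate W \<rho>1))"
    by (rule mate_act_left[OF typed_W, where A = V]) simp_all
  have m3: "mate W (vc C (lw C W \<mu>) (vc C (rw C \<phi> t) (vc C (rw C \<eta>' (cp1 C W t)) \<rho>1))) =
      vc C (act_idem W \<phi>) (mate W \<rho>1)"
    by (rule mate_act_idem_left[OF typed_W, where A = V]) simp_all
  have first: "(vc C (lw C W \<mu>) (vc C (rw C \<rho>1 t) \<psi>) =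
      vc C (lw C W \<mu>) (vc C (rw C \<phi> t) (lw C t' \<rho>1))) \<longleftrightarrow> acts.iota_cond"
    by (subst eq_iff_mate_from_t'V) (unfold m1 m2 mate_rho1 acts.iota_cond_def, simp_all add: acts.eV_bV)
  have second: "(\<rho>1 = vc C (lw C W \<mu>) (vc C (rw C \<phi> t) (vc C (rw C \<eta>' (cp1 C W t)) \<rho>1))) \<longleftrightarrow>
      acts.image_cond"
    by (subst eq_iff_mate_from_V) (unfold m3 mate_rho1 acts.image_cond_def, auto)
  have "hom2 C \<rho>1 V (cp1 C W t)" unfolding hom2_def by simp
  then show ?thesis unfolding emw2_def using first second acts.iota_cond_iff by blast
qed

lemma c2ii_iff: "emw2 C t \<mu> t' \<eta>' V \<psi> W \<phi> \<rho>2 \<longleftrightarrow> acts.pi_cond"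
proof -
  have m1: "mate W (vc C (lw C W \<mu>) (vc C (rw C \<rho>2 t) \<psi>)) = vc C (mate W \<rho>2) (act V \<psi>)"
    by (rule mate_act_right[OF typed_W typed_V]) simp_all
  have m2: "mate W (vc C (lw C W \<mu>) (vc C (rw C \<phi> t) (lw C t' \<rho>2))) =
      vc C (act W \<phi>) (lw C t' (mate W \<rho>2))"
    by (rule mate_act_left[OF typed_W, where A = V]) simp_all
  have m3: "mate W (vc C (lw C W \<mu>) (vc C (rw C \<phi> t) (vc C (rw C \<eta>' (cp1 C W t)) \<rho>2))) =
      vc C (act_idem W \<phi>) (mate W \<rho>2)"
    by (rule mate_act_idem_left[OF typed_W, where A = V]) simp_all
  have first: "(vc C (lw C W \<mu>) (vc C (rw C \<rho>2 t) \<psi>) =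
      vc C (lw C W \<mu>) (vc C (rw C \<phi> t) (lw C t' \<rho>2))) \<longleftrightarrow> acts.pi_cond"
    by (subst eq_iff_mate_from_t'V) (unfold m1 m2 mate_rho2 acts.pi_cond_def, auto simp add: vc_rewrite[OF acts.bW_t'eW])
  have second: "\<rho>2 = vc C (lw C W \<mu>) (vc C (rw C \<phi> t) (vc C (rw C \<eta>' (cp1 C W t)) \<rho>2))"
    by (subst eq_iff_mate_from_V) (unfold m3 mate_rho2, simp_all add: vc_rewrite[OF acts.eW_idem])
  have "hom2 C \<rho>2 V (cp1 C W t)" unfolding hom2_def by simp
  then show ?thesis unfolding emw2_def using first second by blast
qed

abbreviation "JV \<equiv> Jw1 C v \<epsilon> t' v' \<epsilon>' J J' V \<psi> Vt \<pi>V \<iota>V"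
abbreviation "JW \<equiv> Jw1 C v \<epsilon> t' v' \<epsilon>' J J' W \<phi> Wt \<pi>W \<iota>W"
abbreviation "\<sigma> \<equiv> vc C \<pi>W (vc C (rw C \<omega> v) \<iota>V)"
abbreviation "\<sigma>_alg_mor \<equiv>
  alg_mor C t' (cp1 C v' JV) (lw C v' (rw C \<epsilon>' JV)) (cp1 C v' JW) (lw C v' (rw C \<epsilon>' JW)) \<sigma>"

lemma JV_spec: "hom1 C JV J J'" "cp1 C v' JV = Vt" "lw C v' (rw C \<epsilon>' JV) = split_act V \<psi> \<iota>V \<pi>V"
  using Jw1_spec[OF emw1_V split_V] by auto

lemma JW_spec: "hom1 C JW J J'" "cp1 C v' JW = Wt" "lw C v' (rw C \<epsilon>' JW) = split_act W \<phi> \<iota>W \<pi>W"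
  using Jw1_spec[OF emw1_W split_W] by auto

lemma \<sigma>_alg_mor_iff: "\<sigma>_alg_mor \<longleftrightarrow> acts.mor_cond"
proof -
  have "\<sigma>_alg_mor \<longleftrightarrow> acts.split_mor_cond"
    unfolding alg_mor_def JV_spec JW_spec acts.split_mor_cond_def split_act_def hom2_def by simp
  then show ?thesis using acts.split_mor_cond_iff by simp
qed

lemma c1iii_iff: "(\<sigma>_alg_mor \<and> vc C \<iota>W (vc C \<pi>W (vc C (rw C \<omega> v) \<iota>V)) = vc C (rw C \<omega> v) \<iota>V) \<longleftrightarrow>
    acts.iota_cond"
  using \<sigma>_alg_mor_iff acts.image_cond_split_iff acts.iota_cond_iff by blast

lemma c2iii_iff: "(\<sigma>_alg_mor \<and> vc C \<pi>W (vc C (rw C \<omega> v) (vc C \<iota>V \<pi>V)) = vc C \<pi>W (rw C \<omega> v)) \<longleftrightarrow>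
    acts.pi_cond"
  using \<sigma>_alg_mor_iff acts.kernel_cond_split_iff acts.pi_cond_iff by blast

lemma c3iii_iff: "(\<sigma>_alg_mor \<and> vc C \<iota>W (vc C \<pi>W (rw C \<omega> v)) = vc C (rw C \<omega> v) (vc C \<iota>V \<pi>V)) \<longleftrightarrow>
    acts.strict_cond"
  using \<sigma>_alg_mor_iff acts.idem_comm_split_iff acts.idem_comm_iff acts.strict_cond_iff
    acts.iota_cond_iff acts.pi_cond_iff by blast

lemma \<sigma>_lift: "\<sigma>_alg_mor \<Longrightarrow> \<exists>!\<theta>. hom2 C \<theta> JV JW \<and> lw C v' \<theta> = \<sigma>"
  by (rule em'_alg_mor_lift[OF JV_spec(1) JW_spec(1)])

lemma v'_2cell_types: "hom2 C \<theta> JV JW \<Longrightarrow> dom2 C (lw C v' \<theta>) = Vt \<and> cod2 C (lw C v' \<theta>) = Wt"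
  using JV_spec JW_spec unfolding hom2_def hom1_def by auto

lemma weak_iota_lifting_v':
  assumes "weak_iota_lifting C v' JV JW \<iota>V \<iota>W v \<omega> \<theta>"
  shows "hom2 C \<theta> JV JW \<and> lw C v' \<theta> = \<sigma>"
proof -
  have h: "hom2 C \<theta> JV JW" and e: "vc C \<iota>W (lw C v' \<theta>) = vc C (rw C \<omega> v) \<iota>V"
    using assms unfolding weak_iota_lifting_def by auto
  have "lw C v' \<theta> = vc C \<pi>W (vc C \<iota>W (lw C v' \<theta>))"
    using v'_2cell_types[OF h] by (simp add: vc_rewrite[OF acts.pW_iW])
  also have "\<dots> = \<sigma>" unfolding e ..
  finally show ?thesis using h by simp
qed

lemma weak_pi_lifting_v':
  assumes "weak_pi_lifting C v' JV JW \<pi>V \<pi>W v \<omega> \<theta>"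
  shows "hom2 C \<theta> JV JW \<and> lw C v' \<theta> = \<sigma>"
proof -
  have h: "hom2 C \<theta> JV JW" and e: "vc C (lw C v' \<theta>) \<pi>V = vc C \<pi>W (rw C \<omega> v)"
    using assms unfolding weak_pi_lifting_def by auto
  have "lw C v' \<theta> = vc C (vc C (lw C v' \<theta>) \<pi>V) \<iota>V"
    using v'_2cell_types[OF h] by (simp add: acts.pV_iV)
  also have "\<dots> = \<sigma>" unfolding e by simp
  finally show ?thesis using h by simp
qed

lemma weak_iota_lifting_iff: "weak_iota_lifting C v' JV JW \<iota>V \<iota>W v \<omega> \<theta> \<longleftrightarrow>
    (hom2 C \<theta> JV JW \<and> lw C v' \<theta> = \<sigma>) \<and>
    vc C \<iota>W (vc C \<pi>W (vc C (rw C \<omega> v) \<iota>V)) = vc C (rw C \<omega> v) \<iota>V"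
proof
  assume l: "weak_iota_lifting C v' JV JW \<iota>V \<iota>W v \<omega> \<theta>"
  then have "hom2 C \<theta> JV JW \<and> lw C v' \<theta> = \<sigma>" by (rule weak_iota_lifting_v')
  with l show "(hom2 C \<theta> JV JW \<and> lw C v' \<theta> = \<sigma>) \<and>
      vc C \<iota>W (vc C \<pi>W (vc C (rw C \<omega> v) \<iota>V)) = vc C (rw C \<omega> v) \<iota>V"
    unfolding weak_iota_lifting_def by simp
qed (simp add: weak_iota_lifting_def)

lemma weak_pi_lifting_iff: "weak_pi_lifting C v' JV JW \<pi>V \<pi>W v \<omega> \<theta> \<longleftrightarrow>
    (hom2 C \<theta> JV JW \<and> lw C v' \<theta> = \<sigma>) \<and>
    vc C \<pi>W (vc C (rw C \<omega> v) (vc C \<iota>V \<pi>V)) = vc C \<pi>W (rw C \<omega> v)"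
proof
  assume l: "weak_pi_lifting C v' JV JW \<pi>V \<pi>W v \<omega> \<theta>"
  then have "hom2 C \<theta> JV JW \<and> lw C v' \<theta> = \<sigma>" by (rule weak_pi_lifting_v')
  with l show "(hom2 C \<theta> JV JW \<and> lw C v' \<theta> = \<sigma>) \<and>
      vc C \<pi>W (vc C (rw C \<omega> v) (vc C \<iota>V \<pi>V)) = vc C \<pi>W (rw C \<omega> v)"
    unfolding weak_pi_lifting_def by simp
qed (simp add: weak_pi_lifting_def)

lemma \<sigma>_lift_iff: "(\<exists>\<theta>. hom2 C \<theta> JV JW \<and> lw C v' \<theta> = \<sigma>) \<longleftrightarrow> \<sigma>_alg_mor"
proof
  assume "\<exists>\<theta>. hom2 C \<theta> JV JW \<and> lw C v' \<theta> = \<sigma>"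
  then obtain \<theta> where "hom2 C \<theta> JV JW" "lw C v' \<theta> = \<sigma>" by blast
  then show "\<sigma>_alg_mor" using v'_alg_mor[OF JV_spec(1) JW_spec(1), of \<theta>] by simp
qed (rule ex1_implies_ex[OF \<sigma>_lift])

lemma c1iv_iff: "(\<exists>\<theta>. weak_iota_lifting C v' JV JW \<iota>V \<iota>W v \<omega> \<theta>) \<longleftrightarrow>
    (\<sigma>_alg_mor \<and> vc C \<iota>W (vc C \<pi>W (vc C (rw C \<omega> v) \<iota>V)) = vc C (rw C \<omega> v) \<iota>V)"
  by (simp only: weak_iota_lifting_iff ex_simps \<sigma>_lift_iff)

lemma c2iv_iff: "(\<exists>\<theta>. weak_pi_lifting C v' JV JW \<pi>V \<pi>W v \<omega> \<theta>) \<longleftrightarrow>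
    (\<sigma>_alg_mor \<and> vc C \<pi>W (vc C (rw C \<omega> v) (vc C \<iota>V \<pi>V)) = vc C \<pi>W (rw C \<omega> v))"
  by (simp only: weak_pi_lifting_iff ex_simps \<sigma>_lift_iff)

lemma Jw2_unique_lift:
  assumes "\<sigma>_alg_mor" and "vc C \<pi>W (vc C (lw C (cp1 C W v) \<epsilon>) (vc C (rw C \<rho> v) \<iota>V)) = \<sigma>"
  shows "hom2 C \<theta> JV JW \<and> lw C v' \<theta> = \<sigma> \<longleftrightarrow> \<theta> = Jw2 C v \<epsilon> v' JV JW W \<pi>W \<iota>V \<rho>"
proof -
  have u: "\<exists>!\<theta>. hom2 C \<theta> JV JW \<and> lw C v' \<theta> = \<sigma>" using \<sigma>_lift[OF assms(1)] .
  show ?thesis unfolding Jw2_def assms(2)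
    using the1_equality[OF u] theI'[OF u] by blast
qed

lemma Jw2_rho1_formula: "vc C \<pi>W (vc C (lw C (cp1 C W v) \<epsilon>) (vc C (rw C \<rho>1 v) \<iota>V)) = \<sigma>"
proof -
  have "vc C \<pi>W (vc C (lw C (cp1 C W v) \<epsilon>) (vc C (rw C \<rho>1 v) \<iota>V)) = vc C \<pi>W (vc C (mate W \<rho>1) \<iota>V)"
    unfolding mate_def by simp
  also have "\<dots> = \<sigma>" unfolding mate_rho1 by (simp add: acts.eV_iV)
  finally show ?thesis .
qed

lemma Jw2_rho2_formula: "vc C \<pi>W (vc C (lw C (cp1 C W v) \<epsilon>) (vc C (rw C \<rho>2 v) \<iota>V)) = \<sigma>"
proof -
  have "vc C \<pi>W (vc C (lw C (cp1 C W v) \<epsilon>) (vc C (rw C \<rho>2 v) \<iota>V)) = vc C \<pi>W (vc C (mate W \<rho>2) \<iota>V)"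
    unfolding mate_def by simp
  also have "\<dots> = \<sigma>" unfolding mate_rho2 by (simp add: vc_rewrite[OF acts.pW_eW])
  finally show ?thesis .
qed

lemma Jw2_rho1_weak_iota_lifting:
  assumes "acts.iota_cond"
  shows "lw C v' (Jw2 C v \<epsilon> v' JV JW W \<pi>W \<iota>V \<rho>1) = \<sigma> \<and>
    (\<forall>\<theta>. weak_iota_lifting C v' JV JW \<iota>V \<iota>W v \<omega> \<theta> \<longleftrightarrow> \<theta> = Jw2 C v \<epsilon> v' JV JW W \<pi>W \<iota>V \<rho>1)"
proof -
  have c: "\<sigma>_alg_mor" "vc C \<iota>W (vc C \<pi>W (vc C (rw C \<omega> v) \<iota>V)) = vc C (rw C \<omega> v) \<iota>V"
    using c1iii_iff assms by blast+
  note lift = Jw2_unique_lift[OF c(1) Jw2_rho1_formula]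
  show ?thesis unfolding weak_iota_lifting_iff using lift c(2) by blast
qed

lemma Jw2_rho2_weak_pi_lifting:
  assumes "acts.pi_cond"
  shows "lw C v' (Jw2 C v \<epsilon> v' JV JW W \<pi>W \<iota>V \<rho>2) = \<sigma> \<and>
    (\<forall>\<theta>. weak_pi_lifting C v' JV JW \<pi>V \<pi>W v \<omega> \<theta> \<longleftrightarrow> \<theta> = Jw2 C v \<epsilon> v' JV JW W \<pi>W \<iota>V \<rho>2)"
proof -
  have c: "\<sigma>_alg_mor" "vc C \<pi>W (vc C (rw C \<omega> v) (vc C \<iota>V \<pi>V)) = vc C \<pi>W (rw C \<omega> v)"
    using c2iii_iff assms by blast+
  note lift = Jw2_unique_lift[OF c(1) Jw2_rho2_formula]
  show ?thesis unfolding weak_pi_lifting_iff using lift c(2) by blast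
qed

lemma strict_cond_rho_eq:
  assumes "acts.strict_cond"
  shows "\<rho>2 = \<rho>1"
proof -
  have "acts.idem_comm"
    using assms acts.strict_cond_iff acts.iota_cond_iff acts.pi_cond_iff acts.idem_comm_iff by blast
  then have c: "vc C (act_idem W \<phi>) (rw C \<omega> v) = vc C (rw C \<omega> v) (act_idem V \<psi>)"
    unfolding acts.idem_comm_def .
  show ?thesis by (subst eq_iff_mate_from_V) (unfold mate_rho1 mate_rho2 c, simp_all)
qed

lemma strict_cond_liftings_eq:
  assumes "acts.strict_cond" and "weak_iota_lifting C v' JV JW \<iota>V \<iota>W v \<omega> \<theta>1"
    and "weak_pi_lifting C v' JV JW \<pi>V \<pi>W v \<omega> \<theta>2"
  shows "\<theta>1 = \<theta>2"
proof -
  have "\<sigma>_alg_mor" using assms(1) c3iii_iff by blast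
  then obtain \<theta> where "\<forall>\<theta>'. hom2 C \<theta>' JV JW \<and> lw C v' \<theta>' = \<sigma> \<longrightarrow> \<theta>' = \<theta>"
    using \<sigma>_lift by (auto elim: ex1E)
  then show ?thesis using weak_iota_lifting_v'[OF assms(2)] weak_pi_lifting_v'[OF assms(3)] by metis
qed

end

theorem proposition4p3:
  fixes C :: "('o,'a,'c) twocat"
  assumes "two_category C" and "admits_EM C" and "idempotents_split C"
    and "is_monad C k t \<mu> \<eta>" and "is_monad C k' t' \<mu>' \<eta>'"
    and "em_object C k t \<mu> \<eta> J f v \<epsilon>" and "em_object C k' t' \<mu>' \<eta>' J' f' v' \<epsilon>'"
    and "emw1 C t \<mu> t' \<mu>' V \<psi>" and "emw1 C t \<mu> t' \<mu>' W \<phi>"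
    and "hom2 C \<omega> V W"
    and "is_splitting C (emw_idem C v \<epsilon> \<eta>' V \<psi>) Vt \<pi>V \<iota>V"
    and "is_splitting C (emw_idem C v \<epsilon> \<eta>' W \<phi>) Wt \<pi>W \<iota>W"
  shows
   "let JV = Jw1 C v \<epsilon> t' v' \<epsilon>' J J' V \<psi> Vt \<pi>V \<iota>V;
        JW = Jw1 C v \<epsilon> t' v' \<epsilon>' J J' W \<phi> Wt \<pi>W \<iota>W;
        JwR = Jw2 C v \<epsilon> v' JV JW W \<pi>W \<iota>V;
        \<rho>1 = vc C (rw C \<omega> t) (vc C \<psi> (rw C \<eta>' V));
        \<rho>2 = vc C \<phi> (vc C (rw C \<eta>' W) \<omega>);
        \<sigma> = vc C \<pi>W (vc C (rw C \<omega> v) \<iota>V);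
        algmor = alg_mor C t' (cp1 C v' JV) (lw C v' (rw C \<epsilon>' JV))
                              (cp1 C v' JW) (lw C v' (rw C \<epsilon>' JW)) \<sigma>;
        wil = weak_iota_lifting C v' JV JW \<iota>V \<iota>W v \<omega>;
        wpl = weak_pi_lifting C v' JV JW \<pi>V \<pi>W v \<omega>;
        c1i = (vc C (rw C \<omega> t) \<psi> =
               vc C (lw C W \<mu>) (vc C (rw C \<phi> t) (vc C (lw C t' (rw C \<omega> t))
                 (vc C (lw C t' \<psi>) (lw C t' (rw C \<eta>' V))))));
        c1ii = emw2 C t \<mu> t' \<eta>' V \<psi> W \<phi> \<rho>1;
        c1iii = (algmor \<and> vc C \<iota>W (vc C \<pi>W (vc C (rw C \<omega> v) \<iota>V)) = vc C (rw C \<omega> v) \<iota>V);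
        c1iv = (\<exists>\<theta>. wil \<theta>);
        c2i = (vc C \<phi> (lw C t' \<omega>) =
               vc C (lw C W \<mu>) (vc C (rw C \<phi> t) (vc C (rw C \<eta>' (cp1 C W t))
                 (vc C (rw C \<omega> t) \<psi>))));
        c2ii = emw2 C t \<mu> t' \<eta>' V \<psi> W \<phi> \<rho>2;
        c2iii = (algmor \<and> vc C \<pi>W (vc C (rw C \<omega> v) (vc C \<iota>V \<pi>V)) = vc C \<pi>W (rw C \<omega> v));
        c2iv = (\<exists>\<theta>. wpl \<theta>);
        c3i = (vc C \<phi> (lw C t' \<omega>) = vc C (rw C \<omega> t) \<psi>);
        c3ii = (c2ii \<and> c1ii);
        c3iii = (algmor \<and> vc C \<iota>W (vc C \<pi>W (rw C \<omega> v)) = vc C (rw C \<omega> v) (vc C \<iota>V \<pi>V));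
        c3iv = ((\<exists>\<theta>. wil \<theta>) \<and> (\<exists>\<theta>. wpl \<theta>))
    in ((c1i \<longleftrightarrow> c1ii) \<and> (c1ii \<longleftrightarrow> c1iii) \<and> (c1iii \<longleftrightarrow> c1iv) \<and>
        (c1i \<longrightarrow> lw C v' (JwR \<rho>1) = \<sigma> \<and> (\<forall>\<theta>. wil \<theta> \<longleftrightarrow> \<theta> = JwR \<rho>1))) \<and>
       ((c2i \<longleftrightarrow> c2ii) \<and> (c2ii \<longleftrightarrow> c2iii) \<and> (c2iii \<longleftrightarrow> c2iv) \<and>
        (c2i \<longrightarrow> lw C v' (JwR \<rho>2) = \<sigma> \<and> (\<forall>\<theta>. wpl \<theta> \<longleftrightarrow> \<theta> = JwR \<rho>2))) \<and>
       ((c3i \<longleftrightarrow> c3ii) \<and> (c3ii \<longleftrightarrow> c3iii) \<and> (c3iii \<longleftrightarrow> c3iv) \<and>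
        (c3i \<longrightarrow> \<rho>2 = \<rho>1 \<and> (\<forall>\<theta>1 \<theta>2. wil \<theta>1 \<and> wpl \<theta>2 \<longrightarrow> \<theta>1 = \<theta>2)))"
proof -
  interpret weak_lifting_setting C k t \<mu> \<eta> k' t' \<mu>' \<eta>' J f v \<epsilon> J' f' v' \<epsilon>'
      V \<psi> W \<phi> \<omega> Vt \<pi>V \<iota>V Wt \<pi>W \<iota>W
    by unfold_locales (use assms in simp_all)
  show ?thesis
    unfolding Let_def c1iv_iff c2iv_iff c1i_iff c2i_iff c3i_iff c1ii_iff c2ii_iff
      c1iii_iff c2iii_iff c3iii_iff
    using Jw2_rho1_weak_iota_lifting Jw2_rho2_weak_pi_lifting strict_cond_rho_eq
      strict_cond_liftings_eq acts.strict_cond_iff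
    by blast
qed

end
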